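(* Let $m$ be an odd positive integer, $D=D_{2m}$, $\sigma=\sigma_{2m}$, $\tau=\tau_{2m}$, and let $E_m:=\ker\Psi_m$ where $\Psi_m\colon R_m\to I_m$ is as follows: $I_m\subset\mathbb{Z}[D/\langle\sigma^m\rangle]\oplus\mathbb{Z}[D/\langle\tau\rangle]$ is the kernel of the sum of augmentations, $R_m:=\mathbb{Z}[D]\oplus\mathbb{Z}[D/\langle\sigma^m\rangle]\oplus\mathbb{Z}$, and $\Psi_m(x_1,x_2,x_3)=\psi_1(x_1)+\psi_2(x_2)+\psi_3(x_3)$ with $D$-homomorphisms determined by $\psi_1(1)=(1,-1)$, $\psi_2(1)=(1+\sigma^2,-(1+\sigma^m))$, $\psi_3(1)=((\sum_{i=0}^{m-1}\sigma^i)(1+\tau),-\sum_{i=0}^{2m-1}\sigma^i)$. Then there is an isomorphism of $D$-lattices $$E_m\oplus\mathbb{Z}[D/\langle\sigma^2,\sigma^m\tau\rangle]\cong\mathbb{Z}[D/\langle\sigma^m\tau\rangle]\oplus\mathbb{Z}[D/\langle\sigma\rangle]\oplus\mathbb{Z}[D/\langle\sigma^2,\sigma^m\tau\rangle].$$ In particular $E_m$ is stably permutation.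
   Context: $D_{n}:=\langle\sigma_n,\tau_n\mid\sigma_n^n=\tau_n^2=1,\ \tau_n\sigma_n\tau_n^{-1}=\sigma_n^{-1}\rangle$ is the dihedral group of order $2n$. In $\mathbb{Z}[D/H]$, an element $g\in D$ denotes the coset $gH$, extended $\mathbb{Z}$-linearly; $\mathbb{Z}$ carries trivial action; the augmentation $\mathbb{Z}[D/H]\to\mathbb{Z}$ sends each coset to $1$. A lattice $M$ is stably permutation if $M\oplus R\cong R'$ with $R,R'$ having $\mathbb{Z}$-bases permuted by the group. *)

theory Defs
  imports "HOL-Algebra.Algebra" "HOL-Algebra.Left_Coset" "HOL-Library.Function_Algebras" "HOL-Library.Product_Plus"
begin

text \<open>(a, s) represents sigma^a tau^s with 0 <= a < n.  Multiplication uses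
  tau sigma^b = sigma^(-b) tau.\<close>

definition dmul :: "nat \<Rightarrow> nat \<times> bool \<Rightarrow> nat \<times> bool \<Rightarrow> nat \<times> bool" where
  "dmul n x y = (case x of (a, s) \<Rightarrow> case y of (b, t) \<Rightarrow>
      ((if s then a + (n - b mod n) else a + b) mod n, s \<noteq> t))"

definition Dih :: "nat \<Rightarrow> (nat \<times> bool) monoid" where
  "Dih n = \<lparr>carrier = {0..<n} \<times> UNIV, monoid.mult = dmul n, one = (0, False)\<rparr>"

definition dsig :: "nat \<Rightarrow> nat \<times> bool" where "dsig n = (1 mod n, False)"
definition dtau :: "nat \<times> bool" where "dtau = (0, True)"

text \<open>Elements of Z[G/H]: integer-valued functions on the set of left cosets.\<close>
definition perm_mod :: "('a, 'b) monoid_scheme \<Rightarrow> 'a set \<Rightarrow> ('a set \<Rightarrow> int) set" where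
  "perm_mod G H = {f. \<forall>C. C \<notin> lcosets\<^bsub>G\<^esub> H \<longrightarrow> f C = 0}"

text \<open>Action of g: (g . f)(C) = f(g^-1 C), i.e. g sends the basis coset C to gC.\<close>
definition pact :: "('a, 'b) monoid_scheme \<Rightarrow> 'a set \<Rightarrow> 'a \<Rightarrow> ('a set \<Rightarrow> int) \<Rightarrow> ('a set \<Rightarrow> int)" where
  "pact G H g f = (\<lambda>C. if C \<in> lcosets\<^bsub>G\<^esub> H then f (l_coset G (inv\<^bsub>G\<^esub> g) C) else 0)"

definition bas :: "('a, 'b) monoid_scheme \<Rightarrow> 'a set \<Rightarrow> 'a \<Rightarrow> ('a set \<Rightarrow> int)" where
  "bas G H g = (\<lambda>C. if C = l_coset G g H then 1 else 0)"

definition rep :: "('a, 'b) monoid_scheme \<Rightarrow> 'a set \<Rightarrow> 'a set \<Rightarrow> 'a" where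
  "rep G H C = (SOME g. g \<in> carrier G \<and> C = l_coset G g H)"

definition dmod_iso :: "('g, 'b) monoid_scheme \<Rightarrow> 'm::plus set \<Rightarrow> ('g \<Rightarrow> 'm \<Rightarrow> 'm)
    \<Rightarrow> 'n::plus set \<Rightarrow> ('g \<Rightarrow> 'n \<Rightarrow> 'n) \<Rightarrow> bool" where
  "dmod_iso G M actM N actN \<longleftrightarrow> (\<exists>\<phi>. bij_betw \<phi> M N
      \<and> (\<forall>x\<in>M. \<forall>y\<in>M. \<phi> (x + y) = \<phi> x + \<phi> y)
      \<and> (\<forall>g\<in>carrier G. \<forall>x\<in>M. \<phi> (actM g x) = actN g (\<phi> x)))"

definition DD :: "nat \<Rightarrow> (nat \<times> bool) monoid" where "DD m = Dih (2 * m)"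
definition sg :: "nat \<Rightarrow> nat \<times> bool" where "sg m = dsig (2 * m)"

definition spow :: "nat \<Rightarrow> nat \<Rightarrow> nat \<times> bool" where
  "spow m i = sg m [^]\<^bsub>DD m\<^esub> i"

definition H_triv :: "nat \<Rightarrow> (nat \<times> bool) set" where "H_triv m = {\<one>\<^bsub>DD m\<^esub>}"
definition H_sm :: "nat \<Rightarrow> (nat \<times> bool) set" where
  "H_sm m = generate (DD m) {spow m m}"
definition H_t :: "nat \<Rightarrow> (nat \<times> bool) set" where
  "H_t m = generate (DD m) {dtau}"
definition H_s :: "nat \<Rightarrow> (nat \<times> bool) set" where
  "H_s m = generate (DD m) {sg m}"
definition H_smt :: "nat \<Rightarrow> (nat \<times> bool) set" where
  "H_smt m = generate (DD m) {spow m m \<otimes>\<^bsub>DD m\<^esub> dtau}"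
definition H_s2smt :: "nat \<Rightarrow> (nat \<times> bool) set" where
  "H_s2smt m = generate (DD m) {spow m 2, spow m m \<otimes>\<^bsub>DD m\<^esub> dtau}"

type_synonym elt = "(nat \<times> bool) set \<Rightarrow> int"

definition tact :: "nat \<Rightarrow> nat \<times> bool \<Rightarrow> elt \<times> elt \<Rightarrow> elt \<times> elt" where
  "tact m g v = (pact (DD m) (H_sm m) g (fst v), pact (DD m) (H_t m) g (snd v))"

definition tsc :: "int \<Rightarrow> elt \<times> elt \<Rightarrow> elt \<times> elt" where
  "tsc k v = ((\<lambda>C. k * fst v C), (\<lambda>C. k * snd v C))"

text \<open>The D-homomorphism Z[D/H] -> target determined by 1 |-> v, extended Z-linearly.\<close>
definition ind_hom :: "nat \<Rightarrow> (nat \<times> bool) set \<Rightarrow> elt \<times> elt \<Rightarrow> elt \<Rightarrow> elt \<times> elt" where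
  "ind_hom m H v x = (\<Sum>C\<in>lcosets\<^bsub>DD m\<^esub> H. tsc (x C) (tact m (rep (DD m) H C) v))"

definition v1 :: "nat \<Rightarrow> elt \<times> elt" where
  "v1 m = (bas (DD m) (H_sm m) \<one>\<^bsub>DD m\<^esub>, - bas (DD m) (H_t m) \<one>\<^bsub>DD m\<^esub>)"
definition v2 :: "nat \<Rightarrow> elt \<times> elt" where
  "v2 m = (bas (DD m) (H_sm m) \<one>\<^bsub>DD m\<^esub> + bas (DD m) (H_sm m) (spow m 2),
           - (bas (DD m) (H_t m) \<one>\<^bsub>DD m\<^esub> + bas (DD m) (H_t m) (spow m m)))"
definition v3 :: "nat \<Rightarrow> elt \<times> elt" where
  "v3 m = ((\<Sum>i<m. bas (DD m) (H_sm m) (spow m i)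
                   + bas (DD m) (H_sm m) (spow m i \<otimes>\<^bsub>DD m\<^esub> dtau)),
           - (\<Sum>i<2 * m. bas (DD m) (H_t m) (spow m i)))"

definition R_mod :: "nat \<Rightarrow> (elt \<times> elt \<times> int) set" where
  "R_mod m = perm_mod (DD m) (H_triv m) \<times> perm_mod (DD m) (H_sm m) \<times> (UNIV :: int set)"

definition R_act :: "nat \<Rightarrow> nat \<times> bool \<Rightarrow> elt \<times> elt \<times> int \<Rightarrow> elt \<times> elt \<times> int" where
  "R_act m g x = (case x of (x1, x2, x3) \<Rightarrow>
      (pact (DD m) (H_triv m) g x1, pact (DD m) (H_sm m) g x2, x3))"

definition Psi :: "nat \<Rightarrow> elt \<times> elt \<times> int \<Rightarrow> elt \<times> elt" where
  "Psi m x = (case x of (x1, x2, x3) \<Rightarrow>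
      ind_hom m (H_triv m) (v1 m) x1 + ind_hom m (H_sm m) (v2 m) x2 + tsc x3 (v3 m))"

definition E_mod :: "nat \<Rightarrow> (elt \<times> elt \<times> int) set" where
  "E_mod m = {x \<in> R_mod m. Psi m x = 0}"

end

(* In the coordinates u(j,t) = x1(sigma^j tau^t) (j mod 2m) and w(j,t) = x2(sigma^j tau^t <sigma^m>)
   (j mod m), an element (x1, x2, x3) of R_m lies in E_m iff for all j
     u(j,0) + u(j+m,0) + w(j,0) + w(j-2,0) + x3 = 0,
     u(j,1) + u(j+m,1) + w(j,1) + w(j+2,1) + x3 = 0,
     u(j,0) + u(j,1) + w(j,0) + w(j,1) + x3 = 0.
   Eliminating u(.,1) shows that w(c-2,0) - w(c,1) is invariant under c -> c+2 and c -> c+m, hence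
   a constant kappa since m is odd; reflections negate it.  With R = (m-1)/2 and S = sum_{i<m} w(i,0)
   the map
     sigma^c <sigma^m tau> |-> u(c,0) + S - R kappa,   <sigma> |-> q,   tau <sigma> |-> q - kappa,
   where q = m S - 2R(R+1) kappa - (R+1) x3, is additive and D-equivariant.  It is bijective: S and
   x3 are recovered from the image through a 2x2 system of determinant 1, then u(.,0), then w(.,0)
   from w(c,0) + w(c-2,0) = T(c) by an alternating sum around the odd cycle c, c-2, ... of Z/m, and
   finally w(.,1) and u(.,1).  So E_m is isomorphic to Z[D/<sigma^m tau>] + Z[D/<sigma>] itself,
   and the summand Z[D/<sigma^2, sigma^m tau>] is carried along by the identity. *)

theory Submission
  imports Defs
begin

section \<open>Periodic functions on the integers\<close>

lemma int_fun_const_if_step_one: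
  fixes f :: "int \<Rightarrow> 'a"
  assumes "\<And>c. f (c + 1) = f c"
  shows "f c = f 0"
proof (induction c rule: int_induct[where k=0])
  case (step1 i) then show ?case using assms[of i] by simp
next
  case (step2 i) then show ?case using assms[of "i - 1"] by simp
qed simp

lemma periodic_add_mult:
  fixes f :: "int \<Rightarrow> 'a"
  assumes "\<And>c. f (c + d) = f c"
  shows "f (c + k * d) = f c"
proof (induction k rule: int_induct[where k=0])
  case (step1 i)
  have "f (c + (i + 1) * d) = f ((c + i * d) + d)" by (simp add: algebra_simps)
  then show ?case using assms step1 by simp
next
  case (step2 i)
  have "f (c + (i - 1) * d) = f ((c + (i - 1) * d) + d)" using assms by simp
  also have "(c + (i - 1) * d) + d = c + i * d" by (simp add: algebra_simps)
  finally show ?case using step2 by simp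
qed simp

lemma periodic_mod:
  fixes f :: "int \<Rightarrow> 'a"
  assumes "\<And>c. f (c + d) = f c"
  shows "f (j mod d) = f j"
  using periodic_add_mult[of f d, OF assms, of "j mod d" "j div d"] by (simp add: mod_div_mult_eq)

lemma periodic_odd_two_const:
  fixes f :: "int \<Rightarrow> 'a"
  assumes "odd M" "\<And>c. f (c + int M) = f c" "\<And>c. f (c + 2) = f c"
  shows "f c = f 0"
proof (rule int_fun_const_if_step_one)
  fix c
  obtain r where r: "M = 2 * r + 1" using assms(1) by (rule oddE)
  have "f (c + 1) = f ((c + 1) + int M)" by (rule assms(2)[symmetric])
  also have "(c + 1) + int M = c + int (r + 1) * 2" using r by simp
  also have "f (c + int (r + 1) * 2) = f c" by (rule periodic_add_mult) (rule assms(3))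
  finally show "f (c + 1) = f c" .
qed

lemma sum_periodic_shift:
  fixes f :: "int \<Rightarrow> 'a::comm_monoid_add"
  assumes "\<And>c. f (c + int M) = f c"
  shows "(\<Sum>i<M. f (int i + c)) = (\<Sum>i<M. f (int i))"
proof -
  have step: "(\<Sum>i<M. f (int i + (c + 1))) = (\<Sum>i<M. f (int i + c))" for c
  proof (cases M)
    case (Suc n)
    have "(\<Sum>i<M. f (int i + (c + 1))) = (\<Sum>i<n. f (int (Suc i) + c)) + f (c + int M)"
      using Suc by (simp add: algebra_simps)
    also have "\<dots> = (\<Sum>i<n. f (int (Suc i) + c)) + f (int 0 + c)" using assms by simp
    also have "\<dots> = (\<Sum>i<M. f (int i + c))"
      using Suc by (simp only: sum.lessThan_Suc_shift) (simp add: add.commute)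
    finally show ?thesis .
  qed simp
  show ?thesis
    using int_fun_const_if_step_one[of "\<lambda>c. \<Sum>i<M. f (int i + c)"] step by simp
qed

lemma sum_periodic_reflect:
  fixes f :: "int \<Rightarrow> 'a::comm_monoid_add"
  assumes "\<And>c. f (c + int M) = f c"
  shows "(\<Sum>i<M. f (c - int i)) = (\<Sum>i<M. f (int i))"
proof -
  have "(\<Sum>i<M. f (c - int i)) = (\<Sum>i<M. f (c - int M + (int (M - Suc i) + 1)))"
    by (rule sum.cong) (auto simp: of_nat_diff algebra_simps)
  also have "\<dots> = (\<Sum>i<M. f (c - int M + (int i + 1)))"
    using sum.nat_diff_reindex[of "\<lambda>j. f (c - int M + (int j + 1))" M] by simp
  also have "\<dots> = (\<Sum>i<M. f (int i + (c - int M + 1)))" by (simp add: algebra_simps)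
  also have "\<dots> = (\<Sum>i<M. f (int i))" using sum_periodic_shift[of f M, OF assms] by blast
  finally show ?thesis .
qed

lemma sum_lessThan_double:
  fixes g :: "int \<Rightarrow> 'a::comm_monoid_add"
  shows "(\<Sum>i<2 * n. g (int i)) = (\<Sum>i<n. g (int i) + g (int i + int n))"
proof -
  have split: "(\<Sum>i<a + b. h i) = (\<Sum>i<a. h i) + (\<Sum>i<b. h (a + i))" for a b and h :: "nat \<Rightarrow> 'a"
    by (induction b) (simp_all add: add.assoc)
  have "(\<Sum>i<2 * n. g (int i)) = (\<Sum>i<n. g (int i)) + (\<Sum>i<n. g (int (n + i)))"
    using split[where a=n and b=n] by (simp add: mult_2)
  then show ?thesis by (simp add: sum.distrib add.commute)
qed

lemma sum_alternating_telescope: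
  fixes f :: "int \<Rightarrow> int"
  shows "(\<Sum>j<n. (-1) ^ j * (f (c - 2 * int j) + f (c - 2 * int j - 2)))
    = f c - (-1) ^ n * f (c - 2 * int n)"
  by (induction n) (simp_all add: algebra_simps)

lemma sum_neg_one_power_odd:
  assumes "odd n"
  shows "(\<Sum>j<n. (-1::int) ^ j) = 1"
proof -
  have "(\<Sum>j<2 * k + 1. (-1::int) ^ j) = 1" for k :: nat
    by (induction k) (simp_all add: power_mult)
  then show ?thesis using assms by (metis oddE)
qed

lemma odd_sum_odd_terms_iff:
  fixes g :: "nat \<Rightarrow> int" and n :: nat
  assumes "\<And>i. i < n \<Longrightarrow> odd (g i)"
  shows "odd (\<Sum>i<n. g i) \<longleftrightarrow> odd n"
  using assms by (induction n) auto

lemma sum_indicator_congruent: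
  fixes j :: int
  assumes "0 < M"
  shows "(\<Sum>i<M. (if int i mod int M = j mod int M then 1 else 0 :: int)) = 1"
proof -
  have "(\<Sum>i<M. (if int i mod int M = j mod int M then 1 else 0 :: int))
      = (\<Sum>i<M. (if i = nat (j mod int M) then 1 else 0 :: int))"
    using assms by (intro sum.cong) auto
  also have "\<dots> = 1" using assms by (simp add: nat_less_iff)
  finally show ?thesis .
qed

lemma mod_double_cases_iff:
  fixes M i j :: int
  assumes "0 < M"
  shows "(j mod (2 * M) = i mod (2 * M) \<or> j mod (2 * M) = (i + M) mod (2 * M))
    \<longleftrightarrow> j mod M = i mod M"
proof
  assume "j mod (2 * M) = i mod (2 * M) \<or> j mod (2 * M) = (i + M) mod (2 * M)"
  then have "2 * M dvd j - i \<or> 2 * M dvd (j - i) - M" by (auto simp: mod_eq_dvd_iff algebra_simps)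
  then have "M dvd j - i \<or> M dvd (j - i) - M" using dvd_trans[OF dvd_triv_right[of M 2]] by blast
  then have "M dvd j - i" using dvd_add[of M "(j - i) - M" M] by auto
  then show "j mod M = i mod M" by (simp add: mod_eq_dvd_iff)
next
  assume "j mod M = i mod M"
  then obtain q where q: "j - i = M * q" by (auto simp: mod_eq_dvd_iff elim!: dvdE)
  show "j mod (2 * M) = i mod (2 * M) \<or> j mod (2 * M) = (i + M) mod (2 * M)"
  proof (cases "even q")
    case True
    then obtain r where "q = 2 * r" by (rule evenE)
    then have "j - i = (2 * M) * r" using q by simp
    then show ?thesis by (simp add: mod_eq_dvd_iff)
  next
    case False
    then obtain r where "q = 2 * r + 1" by (rule oddE)
    then have "j - (i + M) = (2 * M) * r" using q by (simp add: algebra_simps)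
    then show ?thesis by (simp add: mod_eq_dvd_iff)
  qed
qed

lemma mod_eq_shift_iff:
  fixes M :: int
  shows "j mod M = (i - c) mod M \<longleftrightarrow> i mod M = (j + c) mod M"
    and "j mod M = (i + c) mod M \<longleftrightarrow> i mod M = (j - c) mod M"
proof -
  have "M dvd j - (i - c) \<longleftrightarrow> M dvd i - (j + c)"
    using dvd_minus_iff[of M "j - (i - c)"] by (simp add: algebra_simps)
  then show "j mod M = (i - c) mod M \<longleftrightarrow> i mod M = (j + c) mod M"
    by (simp add: mod_eq_dvd_iff)
  have "M dvd j - (i + c) \<longleftrightarrow> M dvd i - (j - c)"
    using dvd_minus_iff[of M "j - (i + c)"] by (simp add: algebra_simps)
  then show "j mod M = (i + c) mod M \<longleftrightarrow> i mod M = (j - c) mod M"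
    by (simp add: mod_eq_dvd_iff)
qed

lemma mod_add_half:
  fixes j M :: int
  assumes "0 < M"
  shows "(j + M) mod (2 * M) = (if j mod (2 * M) < M then j mod (2 * M) + M else j mod (2 * M) - M)"
proof -
  let ?a = "j mod (2 * M)"
  have a: "0 \<le> ?a" "?a < 2 * M" using assms by simp_all
  have "(j + M) mod (2 * M) = (?a + M) mod (2 * M)" by (rule mod_add_left_eq[symmetric])
  also have "\<dots> = (if ?a < M then ?a + M else ?a - M)"
  proof (cases "?a < M")
    case False
    have "(?a + M) mod (2 * M) = ((?a - M) + 2 * M) mod (2 * M)" by (simp add: algebra_simps)
    also have "\<dots> = (?a - M) mod (2 * M)" by (rule mod_add_self2)
    also have "\<dots> = ?a - M" using a False by simp
    finally show ?thesis using False by simp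
  qed (use a in simp)
  finally show ?thesis .
qed

section \<open>Permutation lattices over an arbitrary group\<close>

lemma sum_fun_apply: "(\<Sum>i\<in>A. f i) x = (\<Sum>i\<in>A. (f i x :: 'b :: comm_monoid_add))"
  by (induction A rule: infinite_finite_induct) auto

lemma l_coset_in_lcosets: "g \<in> carrier G \<Longrightarrow> l_coset G g H \<in> lcosets\<^bsub>G\<^esub> H"
  unfolding LCOSETS_def by blast

lemma lcosetsE:
  "C \<in> lcosets\<^bsub>G\<^esub> H \<Longrightarrow> (\<And>g. g \<in> carrier G \<Longrightarrow> C = l_coset G g H \<Longrightarrow> P) \<Longrightarrow> P"
  unfolding LCOSETS_def by blast

lemma pact_outside: "C \<notin> lcosets\<^bsub>G\<^esub> H \<Longrightarrow> pact G H g f C = 0"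
  by (simp add: pact_def)

lemma bas_outside: "g \<in> carrier G \<Longrightarrow> C \<notin> lcosets\<^bsub>G\<^esub> H \<Longrightarrow> bas G H g C = 0"
  using l_coset_in_lcosets[of g G H] by (auto simp: bas_def)

lemma pact_add: "pact G H g (f1 + f2) = pact G H g f1 + pact G H g f2"
  by (auto simp: pact_def)

lemma pact_uminus: "pact G H g (- f) = - pact G H g f"
  by (auto simp: pact_def)

lemma pact_diff: "pact G H g (f1 - f2) = pact G H g f1 - pact G H g f2"
  by (auto simp: pact_def)

lemma rep_in_carrier: "C \<in> lcosets\<^bsub>G\<^esub> H \<Longrightarrow> rep G H C \<in> carrier G"
  and l_coset_rep: "C \<in> lcosets\<^bsub>G\<^esub> H \<Longrightarrow> l_coset G (rep G H C) H = C"
proof -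
  assume "C \<in> lcosets\<^bsub>G\<^esub> H"
  then have "\<exists>g. g \<in> carrier G \<and> C = l_coset G g H" unfolding LCOSETS_def by blast
  then have "rep G H C \<in> carrier G \<and> C = l_coset G (rep G H C) H"
    unfolding rep_def by (rule someI_ex)
  then show "rep G H C \<in> carrier G" "l_coset G (rep G H C) H = C" by auto
qed

context group
begin

lemma pact_l_coset:
  assumes "subgroup H G" "g \<in> carrier G" "d \<in> carrier G"
  shows "pact G H g f (d <# H) = f ((inv g \<otimes> d) <# H)"
  using assms subgroup.subset[OF assms(1)] l_coset_in_lcosets[of d G H]
  by (simp add: pact_def lcos_m_assoc)

lemma l_coset_eq_iff_mem:
  assumes "subgroup H G" "g \<in> carrier G" "d \<in> carrier G"
  shows "d <# H = g <# H \<longleftrightarrow> g \<in> d <# H"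
  using l_repr_independence[of g d H] lcos_self[of g H] assms by auto

lemma pact_bas:
  assumes "subgroup H G" "g \<in> carrier G" "h \<in> carrier G"
  shows "pact G H g (bas G H h) = bas G H (g \<otimes> h)"
proof
  have HG: "H \<subseteq> carrier G" using assms(1) subgroup.subset by blast
  fix C
  show "pact G H g (bas G H h) C = bas G H (g \<otimes> h) C"
  proof (cases "C \<in> lcosets\<^bsub>G\<^esub> H")
    case False
    then show ?thesis using bas_outside[of "g \<otimes> h" G C H] assms by (simp add: pact_outside)
  next
    case True
    then obtain d where d: "d \<in> carrier G" "C = d <# H" by (rule lcosetsE)
    have "(inv g \<otimes> d) <# H = inv g <# (d <# H)" and "(g \<otimes> h) <# H = g <# (h <# H)"
      using HG d assms by (simp_all add: lcos_m_assoc)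
    moreover have "d <# H = g <# (inv g <# (d <# H))"
      using HG d assms by (simp add: lcos_m_assoc m_assoc[symmetric])
    moreover have "h <# H = inv g <# (g <# (h <# H))"
      using HG assms by (simp add: lcos_m_assoc m_assoc[symmetric])
    ultimately have "(inv g \<otimes> d) <# H = h <# H \<longleftrightarrow> d <# H = (g \<otimes> h) <# H"
      by metis
    then show ?thesis using d assms pact_l_coset[OF assms(1,2) d(1)] by (simp add: bas_def)
  qed
qed

end

lemma dmod_iso_add_summand:
  fixes P :: "'p::plus set"
  assumes "dmod_iso G M actM (N1 \<times> N2) (\<lambda>g (a, b). (act1 g a, act2 g b))"
  shows "dmod_iso G (M \<times> P) (\<lambda>g (x, p). (actM g x, actP g p))
    (N1 \<times> N2 \<times> P) (\<lambda>g (a, b, c). (act1 g a, act2 g b, actP g c))"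
proof -
  obtain \<phi> where bij: "bij_betw \<phi> M (N1 \<times> N2)"
    and add: "\<forall>x\<in>M. \<forall>y\<in>M. \<phi> (x + y) = \<phi> x + \<phi> y"
    and equiv: "\<forall>g\<in>carrier G. \<forall>x\<in>M. \<phi> (actM g x) = (\<lambda>(a, b). (act1 g a, act2 g b)) (\<phi> x)"
    using assms unfolding dmod_iso_def by blast
  define \<psi> where "\<psi> = (\<lambda>(x, p :: 'p). (fst (\<phi> x), snd (\<phi> x), p))"
  have "bij_betw \<psi> (M \<times> P) (N1 \<times> N2 \<times> P)"
  proof (rule bij_betw_byWitness[where f'="\<lambda>(a, b, c). (inv_into M \<phi> (a, b), c)"])
    show "\<forall>x\<in>M \<times> P. (\<lambda>(a, b, c). (inv_into M \<phi> (a, b), c)) (\<psi> x) = x"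
      using bij_betw_inv_into_left[OF bij] by (auto simp: \<psi>_def)
    show "\<forall>y\<in>N1 \<times> N2 \<times> P. \<psi> ((\<lambda>(a, b, c). (inv_into M \<phi> (a, b), c)) y) = y"
      using bij_betw_inv_into_right[OF bij] by (auto simp: \<psi>_def)
    show "\<psi> ` (M \<times> P) \<subseteq> N1 \<times> N2 \<times> P"
      using bij_betw_apply[OF bij] by (force simp: \<psi>_def mem_Times_iff)
    show "(\<lambda>(a, b, c). (inv_into M \<phi> (a, b), c)) ` (N1 \<times> N2 \<times> P) \<subseteq> M \<times> P"
      using bij_betw_apply[OF bij_betw_inv_into[OF bij]] by auto
  qed
  moreover have "\<psi> (x + y) = \<psi> x + \<psi> y" if "x \<in> M \<times> P" "y \<in> M \<times> P" for x y
    using that add by (auto simp: \<psi>_def)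
  moreover have "\<psi> ((\<lambda>(x, p). (actM g x, actP g p)) x)
      = (\<lambda>(a, b, c). (act1 g a, act2 g b, actP g c)) (\<psi> x)"
    if "g \<in> carrier G" "x \<in> M \<times> P" for g x
    using that equiv by (auto simp: \<psi>_def case_prod_beta)
  ultimately show ?thesis unfolding dmod_iso_def by blast
qed

section \<open>The dihedral group of order 4m\<close>

lemma dmul_mod:
  assumes "0 < n"
  shows "dmul n (nat (i mod int n), s) (nat (j mod int n), t)
    = (nat ((if s then i - j else i + j) mod int n), s \<noteq> t)"
proof -
  have lt: "nat (j mod int n) < n" using assms by (simp add: nat_less_iff)
  show ?thesis
  proof (cases s)
    case True
    have "int ((nat (i mod int n) + (n - nat (j mod int n))) mod n)
        = (i mod int n + (int n - j mod int n)) mod int n"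
      using lt assms by (simp add: zmod_int of_nat_diff algebra_simps)
    also have "\<dots> = (i - j) mod int n"
      by (metis (no_types, opaque_lifting) group_cancel.sub1 mod_add_self2 mod_diff_eq)
    finally have "(nat (i mod int n) + (n - nat (j mod int n))) mod n = nat ((i - j) mod int n)"
      by (simp add: nat_eq_iff2 del: of_nat_mod)
    then show ?thesis using True lt by (simp add: dmul_def)
  next
    case False
    have "int ((nat (i mod int n) + nat (j mod int n)) mod n) = (i + j) mod int n"
      using assms by (simp add: zmod_int mod_simps)
    then have "(nat (i mod int n) + nat (j mod int n)) mod n = nat ((i + j) mod int n)"
      by (simp add: nat_eq_iff2 del: of_nat_mod)
    then show ?thesis using False lt by (simp add: dmul_def)
  qed
qed

locale dihedral =
  fixes m :: nat
  assumes m_pos: "0 < m"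
begin

abbreviation "D \<equiv> DD m"

definition el :: "int \<Rightarrow> bool \<Rightarrow> nat \<times> bool" where
  "el i s = (nat (i mod (2 * int m)), s)"

lemma carrier_D: "carrier D = {(a, s). a < 2 * m}"
  by (auto simp: DD_def Dih_def)

lemma el_in_carrier [simp]: "el i s \<in> carrier D"
  using m_pos by (simp add: carrier_D el_def nat_less_iff)

lemma el_of_carrier: "g \<in> carrier D \<Longrightarrow> g = el (int (fst g)) (snd g)"
  by (auto simp: carrier_D el_def)

lemma carrier_elE: "g \<in> carrier D \<Longrightarrow> (\<And>i s. g = el i s \<Longrightarrow> P) \<Longrightarrow> P"
  using el_of_carrier by blast

lemma fst_el: "int (fst (el j s)) = j mod (2 * int m)"
  using m_pos by (simp add: el_def)

lemma snd_el [simp]: "snd (el j s) = s"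
  by (simp add: el_def)

lemma mult_el [simp]: "el i s \<otimes>\<^bsub>D\<^esub> el j t = el (if s then i - j else i + j) (s \<noteq> t)"
  using dmul_mod[of "2 * m" i s j t] m_pos by (simp add: DD_def Dih_def el_def)

lemma one_el: "\<one>\<^bsub>D\<^esub> = el 0 False"
  by (simp add: DD_def Dih_def el_def)

lemma el_eq_iff: "el i s = el j t \<longleftrightarrow> s = t \<and> i mod (2 * int m) = j mod (2 * int m)"
  using m_pos by (auto simp: el_def nat_eq_iff2)

lemma el_mod [simp]: "el (i mod (2 * int m)) s = el i s"
  by (simp add: el_eq_iff)

lemma el_period [simp]:
  "el (i + 2 * int m) s = el i s" "el (2 * int m + i) s = el i s" "el (i + int m + int m) s = el i s"
  "el (2 * int m) s = el 0 s" "el (- int m) s = el (int m) s" "el (i - int m) s = el (i + int m) s"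
  by (simp_all add: el_eq_iff mod_eq_dvd_iff zmod_zminus1_eq_if)

lemma el_add_m_neq [simp]: "el j t \<noteq> el (j + int m) t" "el (j + int m) t \<noteq> el j t"
  using m_pos by (auto simp: el_eq_iff mod_eq_dvd_iff zdvd_not_zless)

lemma group_D: "group D"
proof (rule groupI)
  fix x y assume "x \<in> carrier D" "y \<in> carrier D"
  then show "x \<otimes>\<^bsub>D\<^esub> y \<in> carrier D"
    by (auto elim!: carrier_elE)
next
  fix x y z assume "x \<in> carrier D" "y \<in> carrier D" "z \<in> carrier D"
  then show "x \<otimes>\<^bsub>D\<^esub> y \<otimes>\<^bsub>D\<^esub> z = x \<otimes>\<^bsub>D\<^esub> (y \<otimes>\<^bsub>D\<^esub> z)"
    by (auto elim!: carrier_elE simp: el_eq_iff; simp add: algebra_simps)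
next
  fix x assume "x \<in> carrier D"
  then show "\<exists>y\<in>carrier D. y \<otimes>\<^bsub>D\<^esub> x = \<one>\<^bsub>D\<^esub>"
  proof (elim carrier_elE)
    fix i s assume x: "x = el i s"
    show ?thesis
      by (rule bexI[where x="el (if s then i else - i) s"]) (auto simp: x one_el el_eq_iff)
  qed
qed (auto elim!: carrier_elE simp: one_el)

lemma inv_el [simp]: "inv\<^bsub>D\<^esub> (el i s) = el (if s then i else - i) s"
  using group_D by (intro group.inv_equality) (auto simp: one_el el_eq_iff)

lemma sg_eq: "sg m = el 1 False"
  using m_pos by (simp add: sg_def dsig_def el_def)

lemma dtau_eq: "dtau = el 0 True"
  by (simp add: dtau_def el_def)

lemma spow_eq: "spow m k = el (int k) False"
proof (induction k)
  case 0 then show ?case by (simp add: spow_def one_el)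
next
  case (Suc k)
  have "spow m (Suc k) = spow m k \<otimes>\<^bsub>D\<^esub> sg m"
    by (simp add: spow_def)
  then show ?case using Suc by (simp add: sg_eq add.commute)
qed

lemma generate_eqI:
  assumes "S \<subseteq> K" "subgroup K D" "\<And>g. g \<in> K \<Longrightarrow> g \<in> generate D S"
  shows "generate D S = K"
  using group.generate_subgroup_incl[OF group_D assms(1,2)] assms(3) by blast

lemma subgroup_generate: "S \<subseteq> carrier D \<Longrightarrow> subgroup (generate D S) D"
  using group.generate_is_subgroup[OF group_D] by blast

lemma one_in_generate: "el 0 False \<in> generate D S"
  using generate.one[of D S] by (simp add: one_el)

lemma el_mult_in_generate: "el (int k * d) False \<in> generate D {el d False}"
proof (induction k)
  case 0 then show ?case using one_in_generate by simp
next
  case (Suc k)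
  have "el (int k * d) False \<otimes>\<^bsub>D\<^esub> el d False \<in> generate D {el d False}"
    by (rule generate.eng[OF Suc generate.incl]) simp
  then show ?case by (simp add: algebra_simps)
qed

lemma H_triv_eq: "H_triv m = {el 0 False}"
  by (simp add: H_triv_def one_el)

lemma H_sm_eq: "H_sm m = {el 0 False, el (int m) False}"
  unfolding H_sm_def spow_eq
proof (rule generate_eqI)
  show "subgroup {el 0 False, el (int m) False} D"
    by (rule group.subgroupI[OF group_D]) (auto simp: one_el)
qed (auto intro: generate.incl one_in_generate)

lemma H_t_eq: "H_t m = {el 0 False, el 0 True}"
  unfolding H_t_def dtau_eq
proof (rule generate_eqI)
  show "subgroup {el 0 False, el 0 True} D"
    by (rule group.subgroupI[OF group_D]) (auto simp: one_el)
qed (auto intro: generate.incl one_in_generate)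

lemma H_smt_eq: "H_smt m = {el 0 False, el (int m) True}"
  unfolding H_smt_def dtau_eq spow_eq
proof (rule generate_eqI)
  show "subgroup {el 0 False, el (int m) True} D"
    by (rule group.subgroupI[OF group_D]) (auto simp: one_el)
qed (auto intro: generate.incl one_in_generate)

lemma H_s_eq: "H_s m = range (\<lambda>i. el i False)"
  unfolding H_s_def sg_eq
proof (rule generate_eqI)
  show "subgroup (range (\<lambda>i. el i False)) D"
    by (rule group.subgroupI[OF group_D]) auto
next
  fix g assume "g \<in> range (\<lambda>i. el i False)"
  then obtain i where "g = el i False" by blast
  then have "g = el (int (nat (i mod (2 * int m))) * 1) False" using m_pos by simp
  then show "g \<in> generate D {el 1 False}" using el_mult_in_generate by metis
qed auto

lemma subgroup_H_triv: "subgroup (H_triv m) D"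
  unfolding H_triv_eq by (rule group.subgroupI[OF group_D]) (auto simp: one_el)
lemma subgroup_H_sm: "subgroup (H_sm m) D"
  unfolding H_sm_def by (rule subgroup_generate) (simp add: spow_eq)
lemma subgroup_H_t: "subgroup (H_t m) D"
  unfolding H_t_def by (rule subgroup_generate) (simp add: dtau_eq)
lemma subgroup_H_smt: "subgroup (H_smt m) D"
  unfolding H_smt_def by (rule subgroup_generate) (simp add: dtau_eq spow_eq)
lemma subgroup_H_s: "subgroup (H_s m) D"
  unfolding H_s_def by (rule subgroup_generate) (simp add: sg_eq)

lemma l_coset_H_triv: "l_coset D (el i s) (H_triv m) = {el i s}"
  by (simp add: H_triv_eq l_coset_def)
lemma l_coset_H_sm: "l_coset D (el i s) (H_sm m) = {el i s, el (i + int m) s}"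
  by (auto simp: H_sm_eq l_coset_def)
lemma l_coset_H_t: "l_coset D (el i s) (H_t m) = {el i s, el i (\<not> s)}"
  by (auto simp: H_t_eq l_coset_def)
lemma l_coset_H_smt: "l_coset D (el i s) (H_smt m) = {el i s, el (i + int m) (\<not> s)}"
  by (auto simp: H_smt_eq l_coset_def)
lemma l_coset_H_s: "l_coset D (el i s) (H_s m) = range (\<lambda>j. el j s)"
proof -
  have "el j s \<in> (\<Union>h\<in>range (\<lambda>j. el j False). {el i s \<otimes>\<^bsub>D\<^esub> h})" for j
  proof -
    have "el j s = el i s \<otimes>\<^bsub>D\<^esub> el (if s then i - j else j - i) False" by simp
    then show ?thesis by blast
  qed
  then show ?thesis by (auto simp: H_s_eq l_coset_def)
qed

lemma lcosets_iff: "C \<in> lcosets\<^bsub>D\<^esub> H \<longleftrightarrow> (\<exists>i s. C = l_coset D (el i s) H)"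
  using l_coset_in_lcosets[OF el_in_carrier] el_of_carrier by (metis lcosetsE)

lemma l_coset_el_in_lcosets: "l_coset D (el i s) H \<in> lcosets\<^bsub>D\<^esub> H"
  using lcosets_iff by blast

lemma l_coset_el_eq_iff:
  "subgroup H D \<Longrightarrow> l_coset D (el i s) H = l_coset D (el j t) H \<longleftrightarrow> el j t \<in> l_coset D (el i s) H"
  by (rule group.l_coset_eq_iff_mem[OF group_D]) auto

lemma l_coset_H_sm_eq_iff:
  "l_coset D (el i s) (H_sm m) = l_coset D (el j t) (H_sm m) \<longleftrightarrow> s = t \<and> i mod int m = j mod int m"
proof -
  have "l_coset D (el i s) (H_sm m) = l_coset D (el j t) (H_sm m)
      \<longleftrightarrow> t = s \<and> (j mod (2 * int m) = i mod (2 * int m) \<or> j mod (2 * int m) = (i + int m) mod (2 * int m))"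
    using l_coset_el_eq_iff[OF subgroup_H_sm] by (auto simp: l_coset_H_sm el_eq_iff)
  then show ?thesis
    using mod_double_cases_iff[of "int m" j i] m_pos by auto
qed

lemma l_coset_H_t_eq_iff:
  "l_coset D (el i s) (H_t m) = l_coset D (el j t) (H_t m) \<longleftrightarrow> i mod (2 * int m) = j mod (2 * int m)"
  using l_coset_el_eq_iff[OF subgroup_H_t] by (auto simp: l_coset_H_t el_eq_iff)

definition smt_index :: "int \<Rightarrow> bool \<Rightarrow> int" where
  "smt_index i s = (if s then i + int m else i)"

lemma l_coset_H_smt_eq_iff:
  "l_coset D (el i s) (H_smt m) = l_coset D (el j t) (H_smt m)
    \<longleftrightarrow> smt_index i s mod (2 * int m) = smt_index j t mod (2 * int m)"
proof -
  have "l_coset D (el i s) (H_smt m) = l_coset D (el j t) (H_smt m)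
      \<longleftrightarrow> el j t = el i s \<or> el j t = el (i + int m) (\<not> s)"
    using l_coset_el_eq_iff[OF subgroup_H_smt] by (simp add: l_coset_H_smt)
  also have "\<dots> \<longleftrightarrow> smt_index i s mod (2 * int m) = smt_index j t mod (2 * int m)"
    by (cases s; cases t) (auto simp: el_eq_iff smt_index_def mod_eq_dvd_iff algebra_simps)
  finally show ?thesis .
qed

lemma l_coset_H_s_eq_iff:
  "l_coset D (el i s) (H_s m) = l_coset D (el j t) (H_s m) \<longleftrightarrow> s = t"
proof
  assume "l_coset D (el i s) (H_s m) = l_coset D (el j t) (H_s m)"
  then have "el 0 s \<in> range (\<lambda>j. el j t)" by (metis l_coset_H_s rangeI)
  then show "s = t" by (auto simp: el_eq_iff)
qed (simp add: l_coset_H_s)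

end

section \<open>The kernel of \<open>\<Psi>\<^sub>m\<close> in coordinates\<close>

context dihedral
begin

lemma finite_carrier_D: "finite (carrier D)"
  by (rule finite_subset[of _ "{..<2 * m} \<times> UNIV"]) (auto simp: carrier_D)

lemma finite_lcosets: "finite (lcosets\<^bsub>D\<^esub> H)"
proof -
  have "lcosets\<^bsub>D\<^esub> H = (\<lambda>g. l_coset D g H) ` carrier D" unfolding LCOSETS_def by auto
  then show ?thesis using finite_carrier_D by simp
qed

lemma lcosets_H_triv: "lcosets\<^bsub>D\<^esub> (H_triv m) = (\<lambda>g. {g}) ` carrier D"
proof -
  have "l_coset D g (H_triv m) = {g}" if "g \<in> carrier D" for g
    using el_of_carrier[OF that] l_coset_H_triv by metis
  then show ?thesis unfolding LCOSETS_def by auto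
qed

lemma rep_H_triv: "g \<in> carrier D \<Longrightarrow> rep D (H_triv m) {g} = g"
proof -
  assume g: "g \<in> carrier D"
  then have in_lc: "{g} \<in> lcosets\<^bsub>D\<^esub> (H_triv m)" using lcosets_H_triv by blast
  let ?r = "rep D (H_triv m) {g}"
  have "l_coset D ?r (H_triv m) = {?r}"
    using el_of_carrier[OF rep_in_carrier[OF in_lc]] l_coset_H_triv by metis
  then show ?thesis using l_coset_rep[OF in_lc] by simp
qed

lemma sum_lcosets_H_triv:
  fixes x :: elt and f :: "nat \<times> bool \<Rightarrow> int"
  assumes "Y \<subseteq> carrier D" "\<And>g. g \<in> carrier D \<Longrightarrow> f g = (if g \<in> Y then 1 else 0)"
  shows "(\<Sum>C\<in>lcosets\<^bsub>D\<^esub> (H_triv m). x C * f (rep D (H_triv m) C)) = (\<Sum>g\<in>Y. x {g})"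
proof -
  have "(\<Sum>C\<in>lcosets\<^bsub>D\<^esub> (H_triv m). x C * f (rep D (H_triv m) C))
      = (\<Sum>g\<in>carrier D. x {g} * f (rep D (H_triv m) {g}))"
    unfolding lcosets_H_triv by (subst sum.reindex) (auto simp: inj_on_def)
  also have "\<dots> = (\<Sum>g\<in>carrier D. (if g \<in> Y then x {g} else 0))"
    by (rule sum.cong) (auto simp: rep_H_triv assms(2))
  also have "\<dots> = (\<Sum>g\<in>Y. x {g})"
    using sum.inter_restrict[OF finite_carrier_D, of "\<lambda>g. x {g}" Y, symmetric] assms(1)
    by (simp add: Int_absorb1)
  finally show ?thesis .
qed

lemma sum_lcosets_two_points:
  fixes x :: elt
  assumes "A1 \<in> lcosets\<^bsub>D\<^esub> H" "A2 \<in> lcosets\<^bsub>D\<^esub> H"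
    "\<And>C. C \<in> lcosets\<^bsub>D\<^esub> H \<Longrightarrow> f C = (if C = A1 then 1 else 0) + (if C = A2 then 1 else 0)"
  shows "(\<Sum>C\<in>lcosets\<^bsub>D\<^esub> H. x C * f C) = x A1 + x A2"
proof -
  have "(\<Sum>C\<in>lcosets\<^bsub>D\<^esub> H. x C * f C)
      = (\<Sum>C\<in>lcosets\<^bsub>D\<^esub> H. (if C = A1 then x C else 0) + (if C = A2 then x C else 0))"
    by (rule sum.cong) (auto simp: assms(3) algebra_simps)
  also have "\<dots> = x A1 + x A2"
    using assms(1,2) finite_lcosets by (simp add: sum.distrib)
  finally show ?thesis .
qed

lemma fst_ind_hom:
  "fst (ind_hom m H v x) Y = (\<Sum>C\<in>lcosets\<^bsub>D\<^esub> H. x C * fst (tact m (rep D H C) v) Y)"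
  by (simp add: ind_hom_def fst_sum sum_fun_apply tsc_def)

lemma snd_ind_hom:
  "snd (ind_hom m H v x) Y = (\<Sum>C\<in>lcosets\<^bsub>D\<^esub> H. x C * snd (tact m (rep D H C) v) Y)"
  by (simp add: ind_hom_def snd_sum sum_fun_apply tsc_def)

lemma tact_v1: "g \<in> carrier D \<Longrightarrow> tact m g (v1 m) = (bas D (H_sm m) g, - bas D (H_t m) g)"
  using group.pact_bas[OF group_D subgroup_H_sm] group.pact_bas[OF group_D subgroup_H_t]
  by (simp add: tact_def v1_def pact_uminus pact_diff monoid.r_one[OF group.is_monoid[OF group_D]]
      monoid.one_closed[OF group.is_monoid[OF group_D]])

lemma tact_v2: "g \<in> carrier D \<Longrightarrow> tact m g (v2 m) =
   (bas D (H_sm m) g + bas D (H_sm m) (g \<otimes>\<^bsub>D\<^esub> el 2 False),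
    - (bas D (H_t m) g + bas D (H_t m) (g \<otimes>\<^bsub>D\<^esub> el (int m) False)))"
  using group.pact_bas[OF group_D subgroup_H_sm] group.pact_bas[OF group_D subgroup_H_t]
  by (simp add: tact_def v2_def spow_eq pact_uminus pact_add pact_diff monoid.r_one[OF group.is_monoid[OF group_D]]
      monoid.one_closed[OF group.is_monoid[OF group_D]])

lemma fst_v3: "fst (v3 m) (l_coset D (el j t) (H_sm m)) = 1"
proof -
  have "fst (v3 m) (l_coset D (el j t) (H_sm m))
     = (\<Sum>i<m. (if int i mod int m = j mod int m then 1 else 0))"
    unfolding v3_def spow_eq dtau_eq
    by (cases t) (auto simp: sum_fun_apply bas_def l_coset_H_sm_eq_iff intro!: sum.cong)
  then show ?thesis using sum_indicator_congruent[OF m_pos] by simp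
qed

lemma snd_v3: "snd (v3 m) (l_coset D (el j t) (H_t m)) = -1"
proof -
  have "snd (v3 m) (l_coset D (el j t) (H_t m))
     = - (\<Sum>i<2 * m. (if int i mod int (2 * m) = j mod int (2 * m) then 1 else 0))"
    unfolding v3_def spow_eq
    by (auto simp: sum_fun_apply bas_def l_coset_H_t_eq_iff intro!: sum.cong)
  then show ?thesis using sum_indicator_congruent[of "2 * m"] m_pos by simp
qed

definition coord1 :: "elt \<Rightarrow> int \<Rightarrow> bool \<Rightarrow> int" where
  "coord1 x1 j s = x1 {el j s}"

definition coord2 :: "elt \<Rightarrow> int \<Rightarrow> bool \<Rightarrow> int" where
  "coord2 x2 j s = x2 (l_coset D (el j s) (H_sm m))"

lemma fst_ind_hom_v1:
  "fst (ind_hom m (H_triv m) (v1 m) x1) (l_coset D (el j t) (H_sm m))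
    = coord1 x1 j t + coord1 x1 (j + int m) t"
proof -
  let ?Y = "l_coset D (el j t) (H_sm m)"
  have "fst (ind_hom m (H_triv m) (v1 m) x1) ?Y
      = (\<Sum>C\<in>lcosets\<^bsub>D\<^esub> (H_triv m). x1 C * (\<lambda>g. bas D (H_sm m) g ?Y) (rep D (H_triv m) C))"
    unfolding fst_ind_hom by (rule sum.cong) (auto simp: tact_v1 rep_in_carrier)
  also have "\<dots> = (\<Sum>g\<in>?Y. x1 {g})"
  proof (rule sum_lcosets_H_triv)
    fix g assume "g \<in> carrier D"
    then obtain i s where g: "g = el i s" by (rule carrier_elE)
    show "bas D (H_sm m) g ?Y = (if g \<in> ?Y then 1 else 0)"
      unfolding bas_def g using l_coset_el_eq_iff[OF subgroup_H_sm, of j t i s] by auto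
  qed (simp add: l_coset_H_sm)
  also have "\<dots> = coord1 x1 j t + coord1 x1 (j + int m) t"
    by (simp add: l_coset_H_sm coord1_def)
  finally show ?thesis .
qed

lemma snd_ind_hom_v1:
  "snd (ind_hom m (H_triv m) (v1 m) x1) (l_coset D (el j t) (H_t m))
    = - (coord1 x1 j False + coord1 x1 j True)"
proof -
  let ?Y = "l_coset D (el j t) (H_t m)"
  have "snd (ind_hom m (H_triv m) (v1 m) x1) ?Y
      = - (\<Sum>C\<in>lcosets\<^bsub>D\<^esub> (H_triv m). x1 C * (\<lambda>g. bas D (H_t m) g ?Y) (rep D (H_triv m) C))"
    unfolding snd_ind_hom sum_negf[symmetric] by (rule sum.cong) (auto simp: tact_v1 rep_in_carrier)
  also have "(\<Sum>C\<in>lcosets\<^bsub>D\<^esub> (H_triv m). x1 C * (\<lambda>g. bas D (H_t m) g ?Y) (rep D (H_triv m) C))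
      = (\<Sum>g\<in>?Y. x1 {g})"
  proof (rule sum_lcosets_H_triv)
    fix g assume "g \<in> carrier D"
    then obtain i s where g: "g = el i s" by (rule carrier_elE)
    show "bas D (H_t m) g ?Y = (if g \<in> ?Y then 1 else 0)"
      unfolding bas_def g using l_coset_el_eq_iff[OF subgroup_H_t, of j t i s] by auto
  qed (simp add: l_coset_H_t)
  also have "(\<Sum>g\<in>?Y. x1 {g}) = coord1 x1 j False + coord1 x1 j True"
    by (cases t) (simp_all add: l_coset_H_t coord1_def el_eq_iff)
  finally show ?thesis .
qed

lemma fst_ind_hom_v2:
  "fst (ind_hom m (H_sm m) (v2 m) x2) (l_coset D (el j t) (H_sm m))
    = coord2 x2 j t + coord2 x2 (if t then j + 2 else j - 2) t"
proof -
  let ?Y = "l_coset D (el j t) (H_sm m)"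
  let ?Y2 = "l_coset D (el (if t then j + 2 else j - 2) t) (H_sm m)"
  have "fst (ind_hom m (H_sm m) (v2 m) x2) ?Y = x2 ?Y + x2 ?Y2"
    unfolding fst_ind_hom
  proof (rule sum_lcosets_two_points[OF l_coset_el_in_lcosets l_coset_el_in_lcosets])
    fix C assume C: "C \<in> lcosets\<^bsub>D\<^esub> (H_sm m)"
    obtain i s where r: "rep D (H_sm m) C = el i s"
      using rep_in_carrier[OF C] by (rule carrier_elE)
    have C_eq: "C = l_coset D (el i s) (H_sm m)" using l_coset_rep[OF C] r by simp
    have "bas D (H_sm m) (el i s \<otimes>\<^bsub>D\<^esub> el 2 False) ?Y = (if C = ?Y2 then 1 else 0)"
      unfolding bas_def C_eq using mod_eq_shift_iff[of j "int m" i 2]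
      by (cases s; cases t) (auto simp: l_coset_H_sm_eq_iff)
    moreover have "bas D (H_sm m) (el i s) ?Y = (if C = ?Y then 1 else 0)"
      unfolding bas_def C_eq by auto
    ultimately show "fst (tact m (rep D (H_sm m) C) (v2 m)) ?Y
        = (if C = ?Y then 1 else 0) + (if C = ?Y2 then 1 else 0)"
      using r by (simp add: tact_v2)
  qed
  then show ?thesis by (simp add: coord2_def)
qed

lemma snd_ind_hom_v2:
  "snd (ind_hom m (H_sm m) (v2 m) x2) (l_coset D (el j t) (H_t m))
    = - (coord2 x2 j False + coord2 x2 j True)"
proof -
  let ?Y = "l_coset D (el j t) (H_t m)"
  let ?A1 = "l_coset D (el j False) (H_sm m)"
  let ?A2 = "l_coset D (el j True) (H_sm m)"
  have "(\<Sum>C\<in>lcosets\<^bsub>D\<^esub> (H_sm m). x2 C * (- snd (tact m (rep D (H_sm m) C) (v2 m)) ?Y))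
      = x2 ?A1 + x2 ?A2"
  proof (rule sum_lcosets_two_points[OF l_coset_el_in_lcosets l_coset_el_in_lcosets])
    fix C assume C: "C \<in> lcosets\<^bsub>D\<^esub> (H_sm m)"
    obtain i s where r: "rep D (H_sm m) C = el i s"
      using rep_in_carrier[OF C] by (rule carrier_elE)
    have C_eq: "C = l_coset D (el i s) (H_sm m)" using l_coset_rep[OF C] r by simp
    have not_both: "\<not> (j mod (2 * int m) = i mod (2 * int m) \<and> j mod (2 * int m) = (i + int m) mod (2 * int m))"
      using el_add_m_neq(1)[of i False] by (auto simp: el_eq_iff)
    have "- snd (tact m (el i s) (v2 m)) ?Y
        = (if j mod (2 * int m) = i mod (2 * int m) then 1 else 0)
          + (if j mod (2 * int m) = (i + int m) mod (2 * int m) then 1 else 0)"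
      by (cases s) (auto simp: tact_v2 bas_def l_coset_H_t_eq_iff)
    also have "\<dots> = (if i mod int m = j mod int m then 1 else 0)"
      using not_both mod_double_cases_iff[of "int m" j i] m_pos by auto
    also have "\<dots> = (if C = ?A1 then 1 else 0) + (if C = ?A2 then 1 else 0)"
      unfolding C_eq by (cases s) (auto simp: l_coset_H_sm_eq_iff)
    finally show "- snd (tact m (rep D (H_sm m) C) (v2 m)) ?Y
        = (if C = ?A1 then 1 else 0) + (if C = ?A2 then 1 else 0)"
      using r by simp
  qed
  then have "- (\<Sum>C\<in>lcosets\<^bsub>D\<^esub> (H_sm m). x2 C * snd (tact m (rep D (H_sm m) C) (v2 m)) ?Y)
      = x2 ?A1 + x2 ?A2"
    by (simp add: sum_negf[symmetric])
  then show ?thesis unfolding snd_ind_hom coord2_def by linarith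
qed

lemma fst_Psi:
  "fst (Psi m (x1, x2, x3)) (l_coset D (el j t) (H_sm m))
    = coord1 x1 j t + coord1 x1 (j + int m) t + coord2 x2 j t
      + coord2 x2 (if t then j + 2 else j - 2) t + x3"
  by (simp add: Psi_def tsc_def fst_ind_hom_v1 fst_ind_hom_v2 fst_v3)

lemma snd_Psi:
  "snd (Psi m (x1, x2, x3)) (l_coset D (el j t) (H_t m))
    = - (coord1 x1 j False + coord1 x1 j True + coord2 x2 j False + coord2 x2 j True + x3)"
  by (simp add: Psi_def tsc_def snd_ind_hom_v1 snd_ind_hom_v2 snd_v3)

lemma fst_Psi_outside: "C \<notin> lcosets\<^bsub>D\<^esub> (H_sm m) \<Longrightarrow> fst (Psi m x) C = 0"
  by (cases x) (auto simp: Psi_def tsc_def fst_ind_hom tact_def pact_outside v3_def sum_fun_apply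
      bas_outside spow_eq dtau_eq)

lemma snd_Psi_outside: "C \<notin> lcosets\<^bsub>D\<^esub> (H_t m) \<Longrightarrow> snd (Psi m x) C = 0"
  by (cases x) (auto simp: Psi_def tsc_def snd_ind_hom tact_def pact_outside v3_def sum_fun_apply
      bas_outside spow_eq)

definition kernel_eq1 :: "elt \<Rightarrow> elt \<Rightarrow> int \<Rightarrow> int \<Rightarrow> bool \<Rightarrow> bool" where
  "kernel_eq1 x1 x2 x3 j t \<longleftrightarrow>
     coord1 x1 j t + coord1 x1 (j + int m) t + coord2 x2 j t + coord2 x2 (if t then j + 2 else j - 2) t
     + x3 = 0"

definition kernel_eq2 :: "elt \<Rightarrow> elt \<Rightarrow> int \<Rightarrow> int \<Rightarrow> bool" where
  "kernel_eq2 x1 x2 x3 j \<longleftrightarrow>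
     coord1 x1 j False + coord1 x1 j True + coord2 x2 j False + coord2 x2 j True + x3 = 0"

lemma Psi_eq_0_iff:
  "Psi m (x1, x2, x3) = 0 \<longleftrightarrow> (\<forall>j t. kernel_eq1 x1 x2 x3 j t) \<and> (\<forall>j. kernel_eq2 x1 x2 x3 j)"
proof
  assume z: "Psi m (x1, x2, x3) = 0"
  have "kernel_eq1 x1 x2 x3 j t" for j t
    using arg_cong[OF z, of "\<lambda>p. fst p (l_coset D (el j t) (H_sm m))"]
    by (simp add: fst_Psi kernel_eq1_def)
  moreover have "kernel_eq2 x1 x2 x3 j" for j
    using arg_cong[OF z, of "\<lambda>p. snd p (l_coset D (el j False) (H_t m))"]
    by (simp add: snd_Psi kernel_eq2_def)
  ultimately show "(\<forall>j t. kernel_eq1 x1 x2 x3 j t) \<and> (\<forall>j. kernel_eq2 x1 x2 x3 j)" by blast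
next
  assume eqs: "(\<forall>j t. kernel_eq1 x1 x2 x3 j t) \<and> (\<forall>j. kernel_eq2 x1 x2 x3 j)"
  have "fst (Psi m (x1, x2, x3)) C = 0" for C
  proof (cases "C \<in> lcosets\<^bsub>D\<^esub> (H_sm m)")
    case True
    then obtain j t where "C = l_coset D (el j t) (H_sm m)" using lcosets_iff by blast
    then show ?thesis using eqs by (simp add: fst_Psi kernel_eq1_def)
  qed (simp add: fst_Psi_outside)
  moreover have "snd (Psi m (x1, x2, x3)) C = 0" for C
  proof (cases "C \<in> lcosets\<^bsub>D\<^esub> (H_t m)")
    case True
    then obtain j t where "C = l_coset D (el j t) (H_t m)" using lcosets_iff by blast
    then show ?thesis using eqs by (simp add: snd_Psi kernel_eq2_def)
  qed (simp add: snd_Psi_outside)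
  ultimately show "Psi m (x1, x2, x3) = 0"
    by (simp add: prod_eq_iff fun_eq_iff)
qed

lemma coord2_period [simp]:
  "coord2 x2 (j + int m) s = coord2 x2 j s" "coord2 x2 (j mod int m) s = coord2 x2 j s"
  "coord2 x2 (j + 2 * int m) s = coord2 x2 j s" "coord2 x2 (j mod (2 * int m)) s = coord2 x2 j s"
proof -
  have "l_coset D (el (j + int m) s) (H_sm m) = l_coset D (el j s) (H_sm m)"
    "l_coset D (el (j mod int m) s) (H_sm m) = l_coset D (el j s) (H_sm m)"
    by (simp_all only: l_coset_H_sm_eq_iff) simp_all
  then show "coord2 x2 (j + int m) s = coord2 x2 j s" "coord2 x2 (j mod int m) s = coord2 x2 j s"
    "coord2 x2 (j + 2 * int m) s = coord2 x2 j s" "coord2 x2 (j mod (2 * int m)) s = coord2 x2 j s"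
    by (simp_all add: coord2_def)
qed

lemma mem_E_mod_iff:
  "(x1, x2, x3) \<in> E_mod m \<longleftrightarrow> x1 \<in> perm_mod D (H_triv m) \<and> x2 \<in> perm_mod D (H_sm m)
     \<and> (\<forall>j t. kernel_eq1 x1 x2 x3 j t) \<and> (\<forall>j. kernel_eq2 x1 x2 x3 j)"
  by (auto simp: E_mod_def R_mod_def Psi_eq_0_iff)

end

section \<open>The isomorphism for odd m\<close>

locale dihedral_odd = dihedral +
  assumes m_odd: "odd m"
begin

definition R :: int where "R = (int m - 1) div 2"

lemma m_eq_2R1: "int m = 2 * R + 1"
  using m_odd by (auto simp: R_def elim!: oddE)

definition coord2_sum :: "elt \<Rightarrow> bool \<Rightarrow> int" where
  "coord2_sum x2 t = (\<Sum>i<m. coord2 x2 (int i) t)"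

definition kappa :: "elt \<Rightarrow> int" where
  "kappa x2 = coord2 x2 0 False - coord2 x2 2 True"

context
  fixes x1 x2 :: elt and x3 :: int
  assumes eq1: "\<And>j t. kernel_eq1 x1 x2 x3 j t" and eq2: "\<And>j. kernel_eq2 x1 x2 x3 j"
begin

lemma kappa_eq: "coord2 x2 (c - 2) False - coord2 x2 c True = kappa x2"
proof -
  let ?d = "\<lambda>c. coord2 x2 c False - coord2 x2 (c + 2) True"
  have step: "?d (c + 2) = ?d c" for c
    using eq1[of "c + 2" False] eq1[of "c + 2" True] eq2[of "c + 2"] eq2[of "c + 2 + int m"]
    unfolding kernel_eq1_def kernel_eq2_def by simp
  have period: "?d (c + int m) = ?d c" for c
    using coord2_period(1)[of x2 "c + 2" True] by (simp add: algebra_simps)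
  have "?d (c - 2) = ?d 0" by (rule periodic_odd_two_const[OF m_odd period step])
  then show ?thesis by (simp add: kappa_def)
qed

lemma coord2_sum_True: "coord2_sum x2 True = coord2_sum x2 False - int m * kappa x2"
proof -
  have "coord2_sum x2 True = (\<Sum>i<m. coord2 x2 (int i + (-2)) False - kappa x2)"
    unfolding coord2_sum_def using kappa_eq by (intro sum.cong) (auto simp: algebra_simps)
  also have "\<dots> = (\<Sum>i<m. coord2 x2 (int i + (-2)) False) - int m * kappa x2"
    by (simp add: sum_subtractf)
  also have "(\<Sum>i<m. coord2 x2 (int i + (-2)) False) = coord2_sum x2 False"
    unfolding coord2_sum_def by (rule sum_periodic_shift[of "\<lambda>c. coord2 x2 c False"]) simp
  finally show ?thesis .
qed

lemma coord1_True_eq: "coord1 x1 c True = coord1 x1 (c + int m) False + kappa x2"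
  using eq1[of c False] eq2[of c] kappa_eq[of c] unfolding kernel_eq1_def kernel_eq2_def by simp

lemma sum_coord1_False:
  "(\<Sum>i<2 * m. coord1 x1 (int i) False) = - 2 * coord2_sum x2 False - int m * x3"
proof -
  have "coord1 x1 (int i) False + coord1 x1 (int i + int m) False
      = - coord2 x2 (int i) False - coord2 x2 (int i + (-2)) False - x3" for i
    using eq1[of "int i" False] unfolding kernel_eq1_def by simp
  then have "(\<Sum>i<2 * m. coord1 x1 (int i) False)
      = (\<Sum>i<m. - coord2 x2 (int i) False - coord2 x2 (int i + (-2)) False - x3)"
    by (simp only: sum_lessThan_double[of "\<lambda>c. coord1 x1 c False"])
  also have "\<dots> = - coord2_sum x2 False - (\<Sum>i<m. coord2 x2 (int i + (-2)) False) - int m * x3"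
    by (simp add: coord2_sum_def sum_subtractf sum_negf)
  also have "(\<Sum>i<m. coord2 x2 (int i + (-2)) False) = coord2_sum x2 False"
    unfolding coord2_sum_def by (rule sum_periodic_shift[of "\<lambda>c. coord2 x2 c False"]) simp
  finally show ?thesis by simp
qed

end

definition a_val :: "elt \<Rightarrow> int \<Rightarrow> int" where
  "a_val A c = A (l_coset D (el c False) (H_smt m))"

definition b_val :: "elt \<Rightarrow> bool \<Rightarrow> int" where
  "b_val B s = B (l_coset D (el 0 s) (H_s m))"

definition b_diff :: "elt \<Rightarrow> int" where
  "b_diff B = b_val B False - b_val B True"

definition a_sum :: "elt \<Rightarrow> int" where
  "a_sum A = (\<Sum>i<2 * m. a_val A (int i))"

text \<open>The image (A, B) of (x1, x2, x3) satisfies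
  \<open>a_sum A + 2R(2R+1) b_diff B = 4R S - (2R+1) x3\<close> and
  \<open>b_val B False + 2R(R+1) b_diff B = (2R+1) S - (R+1) x3\<close>, where \<open>S = coord2_sum x2 False\<close>;
  this system has determinant 1, and \<open>S_inv\<close>, \<open>x3_inv\<close> are its solution.\<close>

definition S_inv :: "elt \<Rightarrow> elt \<Rightarrow> int" where
  "S_inv A B = (2 * R + 1) * (b_val B False + 2 * R * (R + 1) * b_diff B)
     - (R + 1) * (a_sum A + 2 * R * (2 * R + 1) * b_diff B)"

definition x3_inv :: "elt \<Rightarrow> elt \<Rightarrow> int" where
  "x3_inv A B = 4 * R * (b_val B False + 2 * R * (R + 1) * b_diff B)
     - (2 * R + 1) * (a_sum A + 2 * R * (2 * R + 1) * b_diff B)"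

text \<open>\<open>T_inv A B c\<close> is \<open>w(c,0) + w(c-2,0)\<close> written in terms of the image (first kernel
  equation), and \<open>w0_inv\<close> solves \<open>w(c) + w(c-2) = T_inv A B c\<close> on Z/m: as m is odd,
  c, c-2, ..., c-2(m-1) runs once through Z/m and the alternating sum telescopes to 2 w(c).\<close>

definition T_inv :: "elt \<Rightarrow> elt \<Rightarrow> int \<Rightarrow> int" where
  "T_inv A B c = - (a_val A c + a_val A (c + int m)) - x3_inv A B + 2 * S_inv A B - 2 * R * b_diff B"

definition alt_inv :: "elt \<Rightarrow> elt \<Rightarrow> int \<Rightarrow> int" where
  "alt_inv A B c = (\<Sum>j<m. (-1) ^ j * T_inv A B (c - 2 * int j))"

definition w0_inv :: "elt \<Rightarrow> elt \<Rightarrow> int \<Rightarrow> int" where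
  "w0_inv A B c = alt_inv A B c div 2"

definition w1_inv :: "elt \<Rightarrow> elt \<Rightarrow> int \<Rightarrow> int" where
  "w1_inv A B c = w0_inv A B (c - 2) - b_diff B"

definition u0_inv :: "elt \<Rightarrow> elt \<Rightarrow> int \<Rightarrow> int" where
  "u0_inv A B c = a_val A c - S_inv A B + R * b_diff B"

definition u1_inv :: "elt \<Rightarrow> elt \<Rightarrow> int \<Rightarrow> int" where
  "u1_inv A B c = - x3_inv A B - u0_inv A B c - w0_inv A B c - w1_inv A B c"

lemma a_val_period [simp]:
  "a_val A (j + 2 * int m) = a_val A j" "a_val A (j mod (2 * int m)) = a_val A j"
  "a_val A (j + int m + int m) = a_val A j"
  by (simp_all add: a_val_def)

lemma T_inv_period: "T_inv A B (c + int m) = T_inv A B c"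
  using a_val_period(3)[of A c] unfolding T_inv_def by linarith

lemma alt_inv_period: "alt_inv A B (c + int m) = alt_inv A B c"
proof -
  have "T_inv A B (c + int m - 2 * int j) = T_inv A B (c - 2 * int j)" for j
    using T_inv_period[of A B "c - 2 * int j"] by (simp add: algebra_simps)
  then show ?thesis unfolding alt_inv_def by simp
qed

lemma w0_inv_period: "w0_inv A B (c + int m) = w0_inv A B c"
  by (simp add: w0_inv_def alt_inv_period)

lemma w1_inv_period: "w1_inv A B (c + int m) = w1_inv A B c"
  using w0_inv_period[of A B "c - 2"] by (simp add: w1_inv_def algebra_simps)

lemma sum_T_inv: "(\<Sum>c<m. T_inv A B (int c)) = 2 * S_inv A B"
proof -
  have "(\<Sum>c<m. T_inv A B (int c))
      = - (\<Sum>c<m. a_val A (int c) + a_val A (int c + int m))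
        - int m * (x3_inv A B - 2 * S_inv A B + 2 * R * b_diff B)"
    unfolding T_inv_def by (simp add: sum_subtractf sum_negf sum.distrib algebra_simps)
  also have "(\<Sum>c<m. a_val A (int c) + a_val A (int c + int m)) = a_sum A"
    unfolding a_sum_def sum_lessThan_double ..
  also have "- a_sum A - int m * (x3_inv A B - 2 * S_inv A B + 2 * R * b_diff B) = 2 * S_inv A B"
    unfolding m_eq_2R1 S_inv_def x3_inv_def by (simp add: algebra_simps)
  finally show ?thesis .
qed

lemma alt_inv_telescope: "alt_inv A B c + alt_inv A B (c - 2) = 2 * T_inv A B c"
proof -
  have "alt_inv A B c + alt_inv A B (c - 2)
      = (\<Sum>j<m. (-1) ^ j * (T_inv A B (c - 2 * int j) + T_inv A B (c - 2 * int j - 2)))"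
    unfolding alt_inv_def sum.distrib[symmetric] by (simp add: algebra_simps)
  also have "\<dots> = T_inv A B c - (-1) ^ m * T_inv A B (c - 2 * int m)"
    by (rule sum_alternating_telescope)
  also have "T_inv A B (c - 2 * int m) = T_inv A B c"
    using T_inv_period[of A B "c - 2 * int m"] T_inv_period[of A B "c - int m"] by simp
  finally show ?thesis using m_odd by simp
qed

lemma sum_alt_inv: "(\<Sum>c<m. alt_inv A B (int c)) = 2 * S_inv A B"
proof -
  have "(\<Sum>c<m. T_inv A B (int c - 2 * int j)) = 2 * S_inv A B" for j
    using sum_periodic_shift[of "T_inv A B" m "- 2 * int j", OF T_inv_period] sum_T_inv by simp
  moreover have "(\<Sum>c<m. alt_inv A B (int c))
      = (\<Sum>j<m. (-1) ^ j * (\<Sum>c<m. T_inv A B (int c - 2 * int j)))"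
    unfolding alt_inv_def by (subst sum.swap) (simp add: sum_distrib_left)
  ultimately have "(\<Sum>c<m. alt_inv A B (int c)) = (\<Sum>j<m. (-1) ^ j * (2 * S_inv A B))"
    by simp
  also have "\<dots> = 2 * S_inv A B"
    using sum_neg_one_power_odd[OF m_odd] by (simp add: sum_distrib_right[symmetric])
  finally show ?thesis .
qed

lemma even_alt_inv: "even (alt_inv A B c)"
proof -
  let ?E = "\<lambda>c. even (alt_inv A B c)"
  have step: "?E (c + 2) = ?E c" for c
    using alt_inv_telescope[of A B "c + 2"]
    by (metis add_diff_cancel_right' even_add even_mult_iff even_numeral)
  have period: "?E (c + int m) = ?E c" for c
    using alt_inv_period by simp
  have all: "?E c = ?E 0" for c
    by (rule periodic_odd_two_const[OF m_odd period step])
  show ?thesis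
  proof (rule ccontr)
    assume "\<not> ?E c"
    then have "odd (alt_inv A B (int i))" if "i < m" for i
      using all by metis
    then have "odd (\<Sum>c<m. alt_inv A B (int c))"
      using odd_sum_odd_terms_iff[of m "\<lambda>i. alt_inv A B (int i)"] m_odd by blast
    then show False using sum_alt_inv by simp
  qed
qed

lemma w0_inv_rec: "w0_inv A B c + w0_inv A B (c - 2) = T_inv A B c"
proof -
  have "2 * w0_inv A B c = alt_inv A B c" "2 * w0_inv A B (c - 2) = alt_inv A B (c - 2)"
    using even_alt_inv unfolding w0_inv_def by auto
  then show ?thesis using alt_inv_telescope[of A B c] by linarith
qed

lemma sum_w0_inv: "(\<Sum>i<m. w0_inv A B (int i)) = S_inv A B"
proof -
  have "(\<Sum>i<m. w0_inv A B (int i)) + (\<Sum>i<m. w0_inv A B (int i + (-2))) = (\<Sum>i<m. T_inv A B (int i))"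
    unfolding sum.distrib[symmetric] using w0_inv_rec by (intro sum.cong) auto
  moreover have "(\<Sum>i<m. w0_inv A B (int i + (-2))) = (\<Sum>i<m. w0_inv A B (int i))"
    by (rule sum_periodic_shift) (rule w0_inv_period)
  ultimately show ?thesis using sum_T_inv by simp
qed


definition smt_val :: "elt \<Rightarrow> elt \<Rightarrow> int \<Rightarrow> int" where
  "smt_val x1 x2 c = coord1 x1 c False + coord2_sum x2 False - R * kappa x2"

definition s_val :: "elt \<Rightarrow> int \<Rightarrow> int" where
  "s_val x2 x3 = (2 * R + 1) * coord2_sum x2 False - 2 * R * (R + 1) * kappa x2 - (R + 1) * x3"

text \<open>A coset {sigma^c, sigma^(c+m) tau} of <sigma^m tau> contains exactly one rotation, so the
  sum below just evaluates \<open>smt_val x1 x2 c\<close>.\<close>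

definition to_smt :: "elt \<Rightarrow> elt \<Rightarrow> elt" where
  "to_smt x1 x2 = (\<lambda>C. if C \<in> lcosets\<^bsub>D\<^esub> (H_smt m)
     then (\<Sum>g\<in>C. if snd g then 0 else smt_val x1 x2 (int (fst g))) else 0)"

definition to_s :: "elt \<Rightarrow> int \<Rightarrow> elt" where
  "to_s x2 x3 = (\<lambda>C. if C \<in> lcosets\<^bsub>D\<^esub> (H_s m)
     then (if el 0 False \<in> C then s_val x2 x3 else s_val x2 x3 - kappa x2) else 0)"

definition E_to_perm :: "elt \<times> elt \<times> int \<Rightarrow> elt \<times> elt" where
  "E_to_perm = (\<lambda>(x1, x2, x3). (to_smt x1 x2, to_s x2 x3))"

definition perm_to_x1 :: "elt \<Rightarrow> elt \<Rightarrow> elt" where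
  "perm_to_x1 A B = (\<lambda>C. if C \<in> lcosets\<^bsub>D\<^esub> (H_triv m)
     then (\<Sum>g\<in>C. if snd g then u1_inv A B (int (fst g)) else u0_inv A B (int (fst g))) else 0)"

text \<open>Of the two elements sigma^j tau^s, sigma^(j+m) tau^s of a coset of <sigma^m> exactly one has
  its exponent, taken in [0, 2m), below m.\<close>

definition perm_to_x2 :: "elt \<Rightarrow> elt \<Rightarrow> elt" where
  "perm_to_x2 A B = (\<lambda>C. if C \<in> lcosets\<^bsub>D\<^esub> (H_sm m)
     then (\<Sum>g\<in>C. if fst g < m then (if snd g then w1_inv A B (int (fst g))
                                      else w0_inv A B (int (fst g))) else 0) else 0)"

definition perm_to_E :: "elt \<times> elt \<Rightarrow> elt \<times> elt \<times> int" where
  "perm_to_E = (\<lambda>(A, B). (perm_to_x1 A B, perm_to_x2 A B, x3_inv A B))"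

lemma to_smt_at: "to_smt x1 x2 (l_coset D (el j s) (H_smt m)) = smt_val x1 x2 (smt_index j s)"
proof -
  have "smt_val x1 x2 (c mod (2 * int m)) = smt_val x1 x2 c" for c
    by (simp add: smt_val_def coord1_def)
  moreover have "el j s \<noteq> el (j + int m) (\<not> s)" by (simp add: el_eq_iff)
  ultimately show ?thesis using l_coset_el_in_lcosets[of j s "H_smt m"]
    by (cases s) (simp_all add: to_smt_def l_coset_H_smt fst_el smt_index_def)
qed

lemma to_s_at: "to_s x2 x3 (l_coset D (el j s) (H_s m)) = (if s then s_val x2 x3 - kappa x2 else s_val x2 x3)"
proof -
  have "el 0 False \<in> range (\<lambda>j. el j s) \<longleftrightarrow> \<not> s"
    by (auto simp: el_eq_iff intro: range_eqI[where x=0])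
  then show ?thesis using l_coset_el_in_lcosets[of j s "H_s m"] by (simp add: to_s_def l_coset_H_s)
qed

lemma w_inv_mod:
  "w0_inv A B (j mod (2 * int m)) = w0_inv A B j" "w1_inv A B (j mod (2 * int m)) = w1_inv A B j"
proof -
  have "w0_inv A B (c + 2 * int m) = w0_inv A B c" "w1_inv A B (c + 2 * int m) = w1_inv A B c" for c
    using w0_inv_period[of A B "c + int m"] w0_inv_period[of A B c]
      w1_inv_period[of A B "c + int m"] w1_inv_period[of A B c]
    by (simp_all add: algebra_simps)
  then show "w0_inv A B (j mod (2 * int m)) = w0_inv A B j" "w1_inv A B (j mod (2 * int m)) = w1_inv A B j"
    by (simp_all add: periodic_mod)
qed

lemma u_inv_mod:
  "u0_inv A B (j mod (2 * int m)) = u0_inv A B j" "u1_inv A B (j mod (2 * int m)) = u1_inv A B j"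
  by (simp_all add: u0_inv_def u1_inv_def w_inv_mod)

lemma coord1_perm_to_x1: "coord1 (perm_to_x1 A B) j s = (if s then u1_inv A B j else u0_inv A B j)"
  using l_coset_el_in_lcosets[of j s "H_triv m"]
  by (simp add: coord1_def perm_to_x1_def l_coset_H_triv fst_el u_inv_mod)

lemma coord2_perm_to_x2: "coord2 (perm_to_x2 A B) j s = (if s then w1_inv A B j else w0_inv A B j)"
proof -
  let ?a = "j mod (2 * int m)"
  let ?w = "\<lambda>c. if s then w1_inv A B c else w0_inv A B c"
  have a: "0 \<le> ?a" "?a < 2 * int m" using m_pos by simp_all
  have fst_shift: "int (fst (el (j + int m) s)) = (if ?a < int m then ?a + int m else ?a - int m)"
    using mod_add_half[of "int m" j] m_pos by (simp add: fst_el)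
  have "fst (el j s) < m \<longleftrightarrow> ?a < int m" using fst_el[of j s] by linarith
  moreover have "fst (el (j + int m) s) < m \<longleftrightarrow> \<not> ?a < int m"
  proof -
    have "fst (el (j + int m) s) < m \<longleftrightarrow> int (fst (el (j + int m) s)) < int m" by simp
    then show ?thesis using fst_shift a by (cases "?a < int m") simp_all
  qed
  moreover have "?w ?a = ?w j" by (simp add: w_inv_mod)
  moreover have "?w ((j + int m) mod (2 * int m)) = ?w j"
    using w_inv_mod[of A B "j + int m"] w0_inv_period[of A B j] w1_inv_period[of A B j] by simp
  moreover have "coord2 (perm_to_x2 A B) j s
      = (if fst (el j s) < m then ?w (int (fst (el j s))) else 0)
        + (if fst (el (j + int m) s) < m then ?w (int (fst (el (j + int m) s))) else 0)"
    using l_coset_el_in_lcosets[of j s "H_sm m"] by (simp add: coord2_def perm_to_x2_def l_coset_H_sm)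
  ultimately show ?thesis by (cases s; simp add: fst_el)
qed

lemma perm_to_E_in_E_mod: "perm_to_E (A, B) \<in> E_mod m"
proof -
  have "kernel_eq1 (perm_to_x1 A B) (perm_to_x2 A B) (x3_inv A B) j t" for j t
    using w0_inv_rec[of A B j] w0_inv_period[of A B j] w1_inv_period[of A B j]
    unfolding kernel_eq1_def coord1_perm_to_x1 coord2_perm_to_x2
    by (cases t) (simp_all add: u1_inv_def u0_inv_def w1_inv_def T_inv_def)
  moreover have "kernel_eq2 (perm_to_x1 A B) (perm_to_x2 A B) (x3_inv A B) j" for j
    unfolding kernel_eq2_def coord1_perm_to_x1 coord2_perm_to_x2 by (simp add: u1_inv_def)
  ultimately show ?thesis
    by (simp add: perm_to_E_def E_mod_def R_mod_def Psi_eq_0_iff perm_mod_def perm_to_x1_def perm_to_x2_def)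
qed

lemma coord2_sum_perm_to_x2: "coord2_sum (perm_to_x2 A B) False = S_inv A B"
  unfolding coord2_sum_def coord2_perm_to_x2 using sum_w0_inv by simp

lemma kappa_perm_to_x2: "kappa (perm_to_x2 A B) = b_diff B"
  unfolding kappa_def coord2_perm_to_x2 by (simp add: w1_inv_def)

lemma to_smt_perm_to_E:
  assumes "A \<in> perm_mod D (H_smt m)"
  shows "to_smt (perm_to_x1 A B) (perm_to_x2 A B) = A"
proof
  fix C
  have val: "smt_val (perm_to_x1 A B) (perm_to_x2 A B) c = a_val A c" for c
    unfolding smt_val_def coord2_sum_perm_to_x2 kappa_perm_to_x2 coord1_perm_to_x1
    by (simp add: u0_inv_def)
  show "to_smt (perm_to_x1 A B) (perm_to_x2 A B) C = A C"
  proof (cases "C \<in> lcosets\<^bsub>D\<^esub> (H_smt m)")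
    case True
    then obtain j s where C: "C = l_coset D (el j s) (H_smt m)" using lcosets_iff by blast
    have "l_coset D (el (smt_index j s) False) (H_smt m) = C"
      unfolding C l_coset_H_smt_eq_iff by (simp add: smt_index_def)
    then show ?thesis unfolding C to_smt_at val a_val_def by simp
  next
    case False then show ?thesis using assms by (simp add: to_smt_def perm_mod_def)
  qed
qed

lemma to_s_perm_to_E:
  assumes "B \<in> perm_mod D (H_s m)"
  shows "to_s (perm_to_x2 A B) (x3_inv A B) = B"
proof
  fix C
  have val: "s_val (perm_to_x2 A B) (x3_inv A B) = b_val B False"
    unfolding s_val_def coord2_sum_perm_to_x2 kappa_perm_to_x2 S_inv_def x3_inv_def
    by (simp add: algebra_simps)
  show "to_s (perm_to_x2 A B) (x3_inv A B) C = B C"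
  proof (cases "C \<in> lcosets\<^bsub>D\<^esub> (H_s m)")
    case True
    then obtain j s where C: "C = l_coset D (el j s) (H_s m)" using lcosets_iff by blast
    have "C = l_coset D (el 0 s) (H_s m)" unfolding C l_coset_H_s_eq_iff by simp
    then show ?thesis
      unfolding to_s_at C val kappa_perm_to_x2 by (cases s) (simp_all add: b_val_def b_diff_def)
  next
    case False then show ?thesis using assms by (simp add: to_s_def perm_mod_def)
  qed
qed


lemma a_val_to_smt: "a_val (to_smt x1 x2) c = smt_val x1 x2 c"
  by (simp add: a_val_def to_smt_at smt_index_def)

lemma b_val_to_s: "b_val (to_s x2 x3) s = (if s then s_val x2 x3 - kappa x2 else s_val x2 x3)"
  by (simp add: b_val_def to_s_at)

lemma b_diff_to_s: "b_diff (to_s x2 x3) = kappa x2"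
  by (simp add: b_diff_def b_val_to_s)

context
  fixes x1 x2 :: elt and x3 :: int
  assumes eq1: "\<And>j t. kernel_eq1 x1 x2 x3 j t" and eq2: "\<And>j. kernel_eq2 x1 x2 x3 j"
begin

lemma a_sum_to_smt:
  "a_sum (to_smt x1 x2)
    = - 2 * coord2_sum x2 False - int m * x3 + 2 * int m * (coord2_sum x2 False - R * kappa x2)"
proof -
  have "a_sum (to_smt x1 x2)
      = (\<Sum>i<2 * m. coord1 x1 (int i) False + (coord2_sum x2 False - R * kappa x2))"
    unfolding a_sum_def a_val_to_smt smt_val_def by (simp add: algebra_simps)
  also have "\<dots> = (\<Sum>i<2 * m. coord1 x1 (int i) False) + 2 * int m * (coord2_sum x2 False - R * kappa x2)"
    by (simp add: sum.distrib)
  finally show ?thesis using sum_coord1_False[OF eq1 eq2] by simp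
qed

lemma S_inv_E_to_perm: "S_inv (to_smt x1 x2) (to_s x2 x3) = coord2_sum x2 False"
  and x3_inv_E_to_perm: "x3_inv (to_smt x1 x2) (to_s x2 x3) = x3"
  unfolding S_inv_def x3_inv_def a_sum_to_smt b_diff_to_s b_val_to_s s_val_def m_eq_2R1
  by (simp_all add: algebra_simps)

lemma T_inv_E_to_perm:
  "T_inv (to_smt x1 x2) (to_s x2 x3) c = coord2 x2 c False + coord2 x2 (c - 2) False"
  using eq1[of c False]
  unfolding T_inv_def a_val_to_smt S_inv_E_to_perm x3_inv_E_to_perm b_diff_to_s smt_val_def kernel_eq1_def
  by simp

lemma w0_inv_E_to_perm: "w0_inv (to_smt x1 x2) (to_s x2 x3) c = coord2 x2 c False"
proof -
  let ?w = "\<lambda>c. coord2 x2 c False"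
  have "alt_inv (to_smt x1 x2) (to_s x2 x3) c
      = (\<Sum>j<m. (-1) ^ j * (?w (c - 2 * int j) + ?w (c - 2 * int j - 2)))"
    unfolding alt_inv_def T_inv_E_to_perm by (simp add: algebra_simps)
  also have "\<dots> = ?w c - (-1) ^ m * ?w (c - 2 * int m)"
    by (rule sum_alternating_telescope)
  also have "\<dots> = 2 * ?w c"
    using m_odd coord2_period(3)[of x2 "c - 2 * int m" False] by simp
  finally show ?thesis by (simp add: w0_inv_def)
qed

lemma w1_inv_E_to_perm: "w1_inv (to_smt x1 x2) (to_s x2 x3) c = coord2 x2 c True"
  using kappa_eq[OF eq1 eq2, of c] by (simp add: w1_inv_def w0_inv_E_to_perm b_diff_to_s)

lemma u0_inv_E_to_perm: "u0_inv (to_smt x1 x2) (to_s x2 x3) c = coord1 x1 c False"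
  by (simp add: u0_inv_def a_val_to_smt smt_val_def S_inv_E_to_perm b_diff_to_s)

lemma u1_inv_E_to_perm: "u1_inv (to_smt x1 x2) (to_s x2 x3) c = coord1 x1 c True"
  using eq2[of c]
  unfolding u1_inv_def u0_inv_E_to_perm w0_inv_E_to_perm w1_inv_E_to_perm x3_inv_E_to_perm kernel_eq2_def
  by simp

end

lemma perm_to_E_E_to_perm:
  assumes "x \<in> E_mod m"
  shows "perm_to_E (E_to_perm x) = x"
proof -
  obtain x1 x2 x3 where x: "x = (x1, x2, x3)" by (metis prod.exhaust)
  have x1: "x1 \<in> perm_mod D (H_triv m)" and x2: "x2 \<in> perm_mod D (H_sm m)"
    and eq1: "\<And>j t. kernel_eq1 x1 x2 x3 j t" and eq2: "\<And>j. kernel_eq2 x1 x2 x3 j"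
    using assms unfolding x mem_E_mod_iff by blast+
  have "perm_to_x1 (to_smt x1 x2) (to_s x2 x3) C = x1 C" for C
  proof (cases "C \<in> lcosets\<^bsub>D\<^esub> (H_triv m)")
    case True
    then obtain j s where "C = {el j s}" using lcosets_iff l_coset_H_triv by metis
    then show ?thesis
      using coord1_perm_to_x1 u0_inv_E_to_perm[OF eq1 eq2] u1_inv_E_to_perm[OF eq1 eq2]
      by (simp add: coord1_def)
  next
    case False then show ?thesis using x1 by (simp add: perm_to_x1_def perm_mod_def)
  qed
  moreover have "perm_to_x2 (to_smt x1 x2) (to_s x2 x3) C = x2 C" for C
  proof (cases "C \<in> lcosets\<^bsub>D\<^esub> (H_sm m)")
    case True
    then obtain j s where "C = l_coset D (el j s) (H_sm m)" using lcosets_iff by blast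
    then show ?thesis
      using coord2_perm_to_x2 w0_inv_E_to_perm[OF eq1 eq2] w1_inv_E_to_perm[OF eq1 eq2]
      by (simp add: coord2_def)
  next
    case False then show ?thesis using x2 by (simp add: perm_to_x2_def perm_mod_def)
  qed
  ultimately show ?thesis
    using x3_inv_E_to_perm[OF eq1 eq2] by (simp add: x E_to_perm_def perm_to_E_def fun_eq_iff)
qed


lemma coord1_add: "coord1 (x1 + y1) j s = coord1 x1 j s + coord1 y1 j s"
  by (simp add: coord1_def)

lemma coord2_add: "coord2 (x2 + y2) j s = coord2 x2 j s + coord2 y2 j s"
  by (simp add: coord2_def)

lemma coord2_sum_add: "coord2_sum (x2 + y2) t = coord2_sum x2 t + coord2_sum y2 t"
  by (simp add: coord2_sum_def coord2_add sum.distrib)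

lemma kappa_add: "kappa (x2 + y2) = kappa x2 + kappa y2"
  by (simp add: kappa_def coord2_add)

lemma to_smt_add: "to_smt (x1 + y1) (x2 + y2) = to_smt x1 x2 + to_smt y1 y2"
proof
  fix C
  have "smt_val (x1 + y1) (x2 + y2) c = smt_val x1 x2 c + smt_val y1 y2 c" for c
    by (simp add: smt_val_def coord1_add coord2_sum_add kappa_add algebra_simps)
  then have "(\<Sum>g\<in>C. if snd g then 0 else smt_val (x1 + y1) (x2 + y2) (int (fst g)))
      = (\<Sum>g\<in>C. (if snd g then 0 else smt_val x1 x2 (int (fst g)))
                 + (if snd g then 0 else smt_val y1 y2 (int (fst g))))"
    by (intro sum.cong) auto
  then show "to_smt (x1 + y1) (x2 + y2) C = (to_smt x1 x2 + to_smt y1 y2) C"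
    by (simp add: to_smt_def sum.distrib)
qed

lemma to_s_add: "to_s (x2 + y2) (x3 + y3) = to_s x2 x3 + to_s y2 y3"
  by (rule ext) (simp add: to_s_def s_val_def coord2_sum_add kappa_add algebra_simps)

lemma E_to_perm_add: "E_to_perm (x + y) = E_to_perm x + E_to_perm y"
  by (cases x; cases y) (simp add: E_to_perm_def to_smt_add to_s_add)

lemma coord1_pact:
  "coord1 (pact D (H_triv m) (el b t) x1) j s = coord1 x1 (if t then b - j else j - b) (t \<noteq> s)"
proof -
  have "coord1 (pact D (H_triv m) (el b t) x1) j s
      = pact D (H_triv m) (el b t) x1 (l_coset D (el j s) (H_triv m))"
    by (simp add: coord1_def l_coset_H_triv)
  also have "\<dots> = x1 (l_coset D (inv\<^bsub>D\<^esub> (el b t) \<otimes>\<^bsub>D\<^esub> el j s) (H_triv m))"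
    by (rule group.pact_l_coset[OF group_D subgroup_H_triv el_in_carrier el_in_carrier])
  finally show ?thesis by (simp add: coord1_def l_coset_H_triv algebra_simps)
qed

lemma coord2_pact:
  "coord2 (pact D (H_sm m) (el b t) x2) j s = coord2 x2 (if t then b - j else j - b) (t \<noteq> s)"
proof -
  have "coord2 (pact D (H_sm m) (el b t) x2) j s
      = x2 (l_coset D (inv\<^bsub>D\<^esub> (el b t) \<otimes>\<^bsub>D\<^esub> el j s) (H_sm m))"
    unfolding coord2_def by (rule group.pact_l_coset[OF group_D subgroup_H_sm el_in_carrier el_in_carrier])
  then show ?thesis by (simp add: coord2_def algebra_simps)
qed

lemma coord2_sum_pact: "coord2_sum (pact D (H_sm m) (el b t) x2) False = coord2_sum x2 t"
proof (cases t)
  case True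
  then have "coord2_sum (pact D (H_sm m) (el b t) x2) False = (\<Sum>i<m. coord2 x2 (b - int i) True)"
    unfolding coord2_sum_def coord2_pact by simp
  also have "\<dots> = coord2_sum x2 True"
    unfolding coord2_sum_def by (rule sum_periodic_reflect) simp
  finally show ?thesis using True by simp
next
  case False
  then have "coord2_sum (pact D (H_sm m) (el b t) x2) False = (\<Sum>i<m. coord2 x2 (int i + (- b)) False)"
    unfolding coord2_sum_def coord2_pact by simp
  also have "\<dots> = coord2_sum x2 False"
    unfolding coord2_sum_def by (rule sum_periodic_shift[of "\<lambda>c. coord2 x2 c False"]) simp
  finally show ?thesis using False by simp
qed

context
  fixes x1 x2 :: elt and x3 :: int
  assumes eq1: "\<And>j t. kernel_eq1 x1 x2 x3 j t" and eq2: "\<And>j. kernel_eq2 x1 x2 x3 j"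
begin

lemma kappa_pact: "kappa (pact D (H_sm m) (el b t) x2) = (if t then - kappa x2 else kappa x2)"
  using kappa_eq[OF eq1 eq2, of b] kappa_eq[OF eq1 eq2, of "2 - b"]
  by (cases t) (simp_all add: kappa_def coord2_pact)

lemma to_smt_pact:
  "to_smt (pact D (H_triv m) (el b t) x1) (pact D (H_sm m) (el b t) x2)
    = pact D (H_smt m) (el b t) (to_smt x1 x2)"
proof
  fix C
  show "to_smt (pact D (H_triv m) (el b t) x1) (pact D (H_sm m) (el b t) x2) C
      = pact D (H_smt m) (el b t) (to_smt x1 x2) C"
  proof (cases "C \<in> lcosets\<^bsub>D\<^esub> (H_smt m)")
    case False then show ?thesis by (simp add: to_smt_def pact_outside)
  next
    case True
    then obtain j s where C: "C = l_coset D (el j s) (H_smt m)" using lcosets_iff by blast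
    have rhs: "pact D (H_smt m) (el b t) (to_smt x1 x2) (l_coset D (el j s) (H_smt m))
        = to_smt x1 x2 (l_coset D (el (if t then b - j else - b + j) (t \<noteq> s)) (H_smt m))"
      using group.pact_l_coset[OF group_D subgroup_H_smt el_in_carrier el_in_carrier] by simp
    show ?thesis
    proof (cases t)
      case False
      have "coord1 x1 (smt_index (j - b) s) False = coord1 x1 (smt_index j s - b) False"
        by (simp add: smt_index_def algebra_simps)
      then show ?thesis using False unfolding C rhs
        by (simp add: to_smt_at smt_val_def coord1_pact coord2_sum_pact kappa_pact algebra_simps)
    next
      case True
      let ?c = "b - smt_index j s"
      have u1: "coord1 x1 ?c True = coord1 x1 (?c + int m) False + kappa x2"
        by (rule coord1_True_eq[OF eq1 eq2])
      have idx: "smt_index (b - j) (\<not> s) = ?c + int m" by (simp add: smt_index_def)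
      show ?thesis using True unfolding C rhs
        by (simp add: to_smt_at smt_val_def coord1_pact coord2_sum_pact kappa_pact coord2_sum_True[OF eq1 eq2, unfolded m_eq_2R1]
            u1 idx algebra_simps)
    qed
  qed
qed

lemma to_s_pact: "to_s (pact D (H_sm m) (el b t) x2) x3 = pact D (H_s m) (el b t) (to_s x2 x3)"
proof
  fix C
  show "to_s (pact D (H_sm m) (el b t) x2) x3 C = pact D (H_s m) (el b t) (to_s x2 x3) C"
  proof (cases "C \<in> lcosets\<^bsub>D\<^esub> (H_s m)")
    case False then show ?thesis by (simp add: to_s_def pact_outside)
  next
    case True
    then obtain j s where C: "C = l_coset D (el j s) (H_s m)" using lcosets_iff by blast
    have "pact D (H_s m) (el b t) (to_s x2 x3) (l_coset D (el j s) (H_s m))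
        = to_s x2 x3 (l_coset D (el (if t then b - j else - b + j) (t \<noteq> s)) (H_s m))"
      using group.pact_l_coset[OF group_D subgroup_H_s el_in_carrier el_in_carrier] by simp
    then show ?thesis unfolding C
      by (cases t; cases s) (simp_all add: to_s_at s_val_def coord2_sum_pact kappa_pact
          coord2_sum_True[OF eq1 eq2, unfolded m_eq_2R1] algebra_simps)
  qed
qed

end

lemma E_to_perm_R_act:
  assumes "g \<in> carrier D" "x \<in> E_mod m"
  shows "E_to_perm (R_act m g x)
    = (\<lambda>(a, b). (pact D (H_smt m) g a, pact D (H_s m) g b)) (E_to_perm x)"
proof -
  obtain b t where g: "g = el b t" using assms(1) by (rule carrier_elE)
  obtain x1 x2 x3 where x: "x = (x1, x2, x3)" by (metis prod.exhaust)
  have eq1: "\<And>j t. kernel_eq1 x1 x2 x3 j t" and eq2: "\<And>j. kernel_eq2 x1 x2 x3 j"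
    using assms(2) unfolding x mem_E_mod_iff by blast+
  show ?thesis
    unfolding g x by (simp add: R_act_def E_to_perm_def to_smt_pact[OF eq1 eq2] to_s_pact[OF eq1 eq2])
qed

lemma E_to_perm_bij:
  "bij_betw E_to_perm (E_mod m) (perm_mod D (H_smt m) \<times> perm_mod D (H_s m))"
proof (rule bij_betw_byWitness[where f'=perm_to_E])
  show "\<forall>x\<in>E_mod m. perm_to_E (E_to_perm x) = x"
    using perm_to_E_E_to_perm by blast
  show "\<forall>y\<in>perm_mod D (H_smt m) \<times> perm_mod D (H_s m). E_to_perm (perm_to_E y) = y"
    by (auto simp: E_to_perm_def perm_to_E_def to_smt_perm_to_E to_s_perm_to_E)
  show "E_to_perm ` E_mod m \<subseteq> perm_mod D (H_smt m) \<times> perm_mod D (H_s m)"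
    by (auto simp: E_to_perm_def perm_mod_def to_smt_def to_s_def)
  show "perm_to_E ` (perm_mod D (H_smt m) \<times> perm_mod D (H_s m)) \<subseteq> E_mod m"
    using perm_to_E_in_E_mod by auto
qed

theorem E_mod_iso_perm:
  "dmod_iso D (E_mod m) (R_act m)
     (perm_mod D (H_smt m) \<times> perm_mod D (H_s m))
     (\<lambda>g (a, b). (pact D (H_smt m) g a, pact D (H_s m) g b))"
  unfolding dmod_iso_def using E_to_perm_bij E_to_perm_add E_to_perm_R_act by blast

end

theorem proposition7p11:
  fixes m :: nat
  assumes "odd m" and "0 < m"
  shows "dmod_iso (DD m)
     (E_mod m \<times> perm_mod (DD m) (H_s2smt m))
     (\<lambda>g (x, p). (R_act m g x, pact (DD m) (H_s2smt m) g p))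
     (perm_mod (DD m) (H_smt m) \<times> perm_mod (DD m) (H_s m) \<times> perm_mod (DD m) (H_s2smt m))
     (\<lambda>g (a, b, c). (pact (DD m) (H_smt m) g a, pact (DD m) (H_s m) g b,
                     pact (DD m) (H_s2smt m) g c))"
proof -
  interpret dihedral_odd m
    using assms by unfold_locales
  show ?thesis
    by (rule dmod_iso_add_summand) (rule E_mod_iso_perm)
qed

end
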